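(* The map $\rho:\mathcal W\mapsto(\mathtt P_{\mathcal W},\mathtt Q_{\mathcal W})$ is a bijection from ${\rm Gr}^{(0)}_+$ onto $$ {\rm Gr}_{\mathcal D}:=\Big\{(\mathtt P,\mathtt Q)\in\mathcal D^2\ \Big|\ [\mathtt P,\mathtt Q]=1,\ \ \mathtt P-\partial_z\in z^{-1}\mathcal D_-,\ \ \mathtt Q-z\in\mathcal D_-\Big\}. $$ Its inverse sends $(\mathtt P,\mathtt Q)\in{\rm Gr}_{\mathcal D}$ to ${\rm span}\{\Psi,\mathtt Q\cdot\Psi,\mathtt Q^2\cdot\Psi,\dots\}$, where $\Psi$ is the unique solution of $\mathtt P\cdot\Psi=0$ lying in $1+H_-$.
   Context: Let $H_+=\mathbb C[z]$, $H_-=z^{-1}\mathbb C[[z^{-1}]]$, $H=H_+\oplus H_-=\mathbb C((z^{-1}))$. The (big cell of the) Sato Grassmannian ${\rm Gr}^{(0)}_+$ is the set of closed linear subspaces $\mathcal W\subset H$ such that the projection $\pi_+:\mathcal W\to H_+$ along $H_-$ is an isomorphism. Let $\mathcal D=\mathbb C((z^{-1}))[[\partial_z]]$ be the ring of differential operators $\sum_{m\ge0}a_m(z)\partial_z^m$ with $a_m\in H$ (product given by the Leibniz rule), acting on $H$; let $\mathcal D_\pm=H_\pm[[\partial_z]]$, so $\mathcal D=\mathcal D_+\oplus\mathcal D_-$. Let $\mathcal G=\{\mathtt G\in\mathcal D:\mathtt G-1\in\mathcal D_-\}$ (a group). Sato's theorem: for every $\mathcal W\in{\rm Gr}^{(0)}_+$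 there is a unique $\mathtt G_{\mathcal W}\in\mathcal G$ (the Sato group element) with $\mathcal W=\mathtt G_{\mathcal W}\cdot H_+$, and $\mathcal W\mapsto\mathtt G_{\mathcal W}$ is a bijection ${\rm Gr}^{(0)}_+\to\mathcal G$. The canonical Kac–Schwarz pair of $\mathcal W$ is $\mathtt P_{\mathcal W}:=\mathtt G_{\mathcal W}\,\partial_z\,\mathtt G_{\mathcal W}^{-1}$, $\mathtt Q_{\mathcal W}:=\mathtt G_{\mathcal W}\,z\,\mathtt G_{\mathcal W}^{-1}$. *)

theory Defs
  imports Complex_Main "HOL-Library.Groups_Big_Fun"
begin

text \<open>Elements of H = C((z^-1)) are coefficient functions f :: int => complex,
  f k = coefficient of z^k, with support bounded above.\<close>

type_synonym laurent = "int \<Rightarrow> complex"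

definition Hset :: "laurent set" where
  "Hset = {f. \<exists>N. \<forall>k>N. f k = 0}"

definition Hplus :: "laurent set" where
  "Hplus = {f. f \<in> Hset \<and> (\<forall>k<0. f k = 0)}"

definition Hminus :: "laurent set" where
  "Hminus = {f. \<forall>k\<ge>0. f k = 0}"

definition one_plus_Hminus :: "laurent set" where
  "one_plus_Hminus = {f. f 0 = 1 \<and> (\<forall>k>0. f k = 0)}"

definition proj_plus :: "laurent \<Rightarrow> laurent" where
  "proj_plus f = (\<lambda>k. if k \<ge> 0 then f k else 0)"

definition lin_subspace :: "laurent set \<Rightarrow> bool" where
  "lin_subspace W \<longleftrightarrow> (\<lambda>_. 0) \<in> W \<and> (\<forall>f\<in>W. \<forall>g\<in>W. (\<lambda>k. f k + g k) \<in> W)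
     \<and> (\<forall>c. \<forall>f\<in>W. (\<lambda>k. c * f k) \<in> W)"

text \<open>Closedness in the z^-1-adic topology of H: W contains every f in H which
  can be approximated by elements of W modulo z^(-N-1) C[[z^-1]] for every N.\<close>
definition closed_H :: "laurent set \<Rightarrow> bool" where
  "closed_H W \<longleftrightarrow> (\<forall>f\<in>Hset. (\<forall>N::int. \<exists>w\<in>W. \<forall>k\<ge>-N. w k = f k) \<longrightarrow> f \<in> W)"

definition Gr0 :: "laurent set set" where
  "Gr0 = {W. W \<subseteq> Hset \<and> lin_subspace W \<and> closed_H W \<and> bij_betw proj_plus W Hplus}"

text \<open>Differential operators sum_m a_m(z) d^m: A m k = coefficient of z^k d^m.\<close>
type_synonym diffop = "nat \<Rightarrow> int \<Rightarrow> complex"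

definition Dset :: "diffop set" where
  "Dset = {A. \<forall>m. A m \<in> Hset}"

definition Dminus :: "diffop set" where
  "Dminus = {A. \<forall>m k. k \<ge> 0 \<longrightarrow> A m k = 0}"

definition zinv_Dminus :: "diffop set" where
  "zinv_Dminus = {A. \<forall>m k. k \<ge> -1 \<longrightarrow> A m k = 0}"

definition D_one :: diffop where
  "D_one = (\<lambda>m k. if m = 0 \<and> k = 0 then 1 else 0)"

definition D_z :: diffop where
  "D_z = (\<lambda>m k. if m = 0 \<and> k = 1 then 1 else 0)"

definition D_del :: diffop where
  "D_del = (\<lambda>m k. if m = 1 \<and> k = 0 then 1 else 0)"

definition D_sub :: "diffop \<Rightarrow> diffop \<Rightarrow> diffop" where
  "D_sub A B = (\<lambda>m k. A m k - B m k)"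

text \<open>Coefficient of z^i in d^m f.\<close>
definition deriv_coef :: "nat \<Rightarrow> laurent \<Rightarrow> int \<Rightarrow> complex" where
  "deriv_coef m f i = (\<Prod>t<m. of_int (i + int m - int t)) * f (i + int m)"

text \<open>Action of D on H (sums have finitely many nonzero terms where used).\<close>
definition D_act :: "diffop \<Rightarrow> laurent \<Rightarrow> laurent" where
  "D_act A f = (\<lambda>l. Sum_any (\<lambda>(m::nat, k::int). A m k * deriv_coef m f (l - k)))"

text \<open>Product in D given by the Leibniz rule:
  (a d^m)(b d^n) = sum_j (m choose j) a b^(j) d^(m+n-j).\<close>
definition D_mult :: "diffop \<Rightarrow> diffop \<Rightarrow> diffop" where
  "D_mult A B = (\<lambda>p l. Sum_any (\<lambda>(m::nat, j::nat, k::int).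
      if j \<le> m \<and> m \<le> p + j
      then A m k * of_nat (m choose j) * deriv_coef j (B (p + j - m)) (l - k)
      else 0))"

primrec D_pow :: "diffop \<Rightarrow> nat \<Rightarrow> diffop" where
  "D_pow A 0 = D_one"
| "D_pow A (Suc n) = D_mult A (D_pow A n)"

definition D_comm :: "diffop \<Rightarrow> diffop \<Rightarrow> diffop" where
  "D_comm A B = D_sub (D_mult A B) (D_mult B A)"

definition Gcal :: "diffop set" where
  "Gcal = {G. G \<in> Dset \<and> D_sub G D_one \<in> Dminus}"

definition G_inv :: "diffop \<Rightarrow> diffop" where
  "G_inv G = (THE G'. G' \<in> Gcal \<and> D_mult G G' = D_one)"

definition sato :: "laurent set \<Rightarrow> diffop" where
  "sato W = (THE G. G \<in> Gcal \<and> W = D_act G ` Hplus)"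

definition KS_P :: "laurent set \<Rightarrow> diffop" where
  "KS_P W = D_mult (sato W) (D_mult D_del (G_inv (sato W)))"

definition KS_Q :: "laurent set \<Rightarrow> diffop" where
  "KS_Q W = D_mult (sato W) (D_mult D_z (G_inv (sato W)))"

definition rho :: "laurent set \<Rightarrow> diffop \<times> diffop" where
  "rho W = (KS_P W, KS_Q W)"

definition GrD :: "(diffop \<times> diffop) set" where
  "GrD = {(P, Q). P \<in> Dset \<and> Q \<in> Dset \<and> D_comm P Q = D_one
          \<and> D_sub P D_del \<in> zinv_Dminus \<and> D_sub Q D_z \<in> Dminus}"

definition lin_span :: "laurent set \<Rightarrow> laurent set" where
  "lin_span S = {x. \<exists>(n::nat) c v. (\<forall>i<n. v i \<in> S) \<and> x = (\<lambda>k. \<Sum>i<n. c i * v i k)}"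

end

theory Submission
  imports Defs
begin

(* Sato's theorem writes a point of the big cell as W = G H_+ with G = 1 + (operator with
   coefficients in H_-), the columns G z^n being adjusted one at a time to land in W. Dressing
   the canonical pair (\<partial>, z) by G gives P = G \<partial> G^-1 and Q = G z G^-1 with [P, Q] = 1, and the
   defects P - \<partial> = [G, \<partial>] G^-1, Q - z = [G, z] G^-1 have the required orders.
   Conversely, for (P, Q) in Gr_D, since P = \<partial> + z^-2(...) the equation P \<Psi> = 0 is solved
   uniquely in 1 + H_- by descending recursion on the coefficients. Let G be the operator with
   G z^n = Q^n \<Psi>. Comparing coefficients in Q G = G z shows that G lies in the group, and
   [P, Q] = 1 gives P Q^n \<Psi> = n Q^(n-1) \<Psi>, i.e. P G = G \<partial>. Hence G dresses (\<partial>, z) into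
   (P, Q) and span {Q^n \<Psi>} = G H_+. Finally rho is injective because G 1 is the wave function
   of P_W and G z^n = Q_W^n (G 1), so the pair determines G and hence W. *)

text \<open>\<open>ffact x m = x (x - 1) \<dots> (x - m + 1)\<close>, so that \<open>\<partial>\<^sup>m z\<^sup>x = ffact x m z\<^sup>x\<^sup>-\<^sup>m\<close>.\<close>
definition ffact :: "int \<Rightarrow> nat \<Rightarrow> complex" where
  "ffact x m = (\<Prod>t<m. of_int (x - int t))"

lemma ffact_0 [simp]: "ffact x 0 = 1"
  by (simp add: ffact_def)

lemma ffact_Suc: "ffact x (Suc m) = ffact x m * of_int (x - int m)"
  by (simp add: ffact_def)

lemma ffact_add: "ffact x (n + q) = ffact x n * ffact (x - int n) q"
  by (induction q) (simp_all add: ffact_Suc algebra_simps)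

lemma ffact_eq_0: "n < m \<Longrightarrow> ffact (int n) m = 0"
  unfolding ffact_def by (rule prod_zero) (auto intro!: bexI[of _ n])

lemma ffact_nonzero: "m \<le> n \<Longrightarrow> ffact (int n) m \<noteq> 0"
  unfolding ffact_def by (auto simp: prod_zero_iff)

lemma ffact_Vandermonde:
  "ffact (a + b) m = (\<Sum>j\<le>m. of_nat (m choose j) * ffact a j * ffact b (m - j))"
proof (induction m)
  case 0
  then show ?case by simp
next
  case (Suc m)
  have "ffact (a + b) (Suc m) =
      (\<Sum>j\<le>m. of_nat (m choose j) * ffact a j * ffact b (m - j)) * of_int (a + b - int m)"
    by (simp add: ffact_Suc Suc)
  also have "\<dots> = (\<Sum>j\<le>m. of_nat (m choose j) * ffact a (Suc j) * ffact b (m - j))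
    + (\<Sum>j\<le>m. of_nat (m choose j) * ffact a j * ffact b (Suc (m - j)))"
    unfolding sum_distrib_right sum.distrib[symmetric]
  proof (rule sum.cong[OF refl])
    fix j assume "j \<in> {..m}"
    then have "of_int (b - int (m - j)) = (of_int b - of_nat m + of_nat j :: complex)"
      by (simp add: of_nat_diff)
    then show "of_nat (m choose j) * ffact a j * ffact b (m - j) * of_int (a + b - int m) =
        of_nat (m choose j) * ffact a (Suc j) * ffact b (m - j)
      + of_nat (m choose j) * ffact a j * ffact b (Suc (m - j))"
      by (simp add: ffact_Suc algebra_simps)
  qed
  also have "(\<Sum>j\<le>m. of_nat (m choose j) * ffact a (Suc j) * ffact b (m - j)) =
      (\<Sum>j\<le>Suc m. of_nat (m choose (j - 1)) * (if j = 0 then 0 else ffact a j * ffact b (Suc m - j)))"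
    by (subst sum.atMost_Suc_shift) (simp add: mult.assoc)
  also have "(\<Sum>j\<le>m. of_nat (m choose j) * ffact a j * ffact b (Suc (m - j))) =
      (\<Sum>j\<le>Suc m. of_nat (m choose j) * ffact a j * ffact b (Suc m - j))"
    by (simp add: sum.atMost_Suc Suc_diff_le)
  also have "(\<Sum>j\<le>Suc m. of_nat (m choose (j - 1)) * (if j = 0 then 0 else ffact a j * ffact b (Suc m - j)))
      + (\<Sum>j\<le>Suc m. of_nat (m choose j) * ffact a j * ffact b (Suc m - j))
    = (\<Sum>j\<le>Suc m. of_nat (Suc m choose j) * ffact a j * ffact b (Suc m - j))"
    unfolding sum.distrib[symmetric]
  proof (rule sum.cong[OF refl])
    fix j
    show "of_nat (m choose (j - 1)) * (if j = 0 then 0 else ffact a j * ffact b (Suc m - j))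
        + of_nat (m choose j) * ffact a j * ffact b (Suc m - j)
      = of_nat (Suc m choose j) * ffact a j * ffact b (Suc m - j)"
      by (cases j) (simp_all add: algebra_simps)
  qed
  finally show ?case .
qed

text \<open>The Leibniz rule for \<open>\<partial>\<^sup>m (z\<^sup>b \<partial>\<^sup>n z\<^sup>s)\<close>, read off on coefficients.\<close>
lemma ffact_Leibniz:
  "(\<Sum>j\<le>m. of_nat (m choose j) * ffact b j * ffact s (n + (m - j))) = ffact s n * ffact (b + s - int n) m"
proof -
  have "(\<Sum>j\<le>m. of_nat (m choose j) * ffact b j * ffact s (n + (m - j))) =
      ffact s n * (\<Sum>j\<le>m. of_nat (m choose j) * ffact b j * ffact (s - int n) (m - j))"
    unfolding ffact_add sum_distrib_left by (rule sum.cong) (simp_all add: algebra_simps)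
  also have "\<dots> = ffact s n * ffact (b + (s - int n)) m"
    by (simp only: ffact_Vandermonde)
  finally show ?thesis
    by (simp only: add_diff_eq)
qed

lemma deriv_coef_ffact: "deriv_coef m f i = ffact (i + int m) m * f (i + int m)"
  by (simp add: deriv_coef_def ffact_def)

lemma deriv_coef_add: "deriv_coef m (\<lambda>k. f k + g k) i = deriv_coef m f i + deriv_coef m g i"
  by (simp add: deriv_coef_def algebra_simps)

lemma deriv_coef_scale: "deriv_coef m (\<lambda>k. c * f k) i = c * deriv_coef m f i"
  by (simp add: deriv_coef_def algebra_simps)

definition deg_le :: "int \<Rightarrow> laurent \<Rightarrow> bool" where
  "deg_le d f \<longleftrightarrow> (\<forall>k. d < k \<longrightarrow> f k = 0)"

definition op_deg_le :: "int \<Rightarrow> diffop \<Rightarrow> bool" where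
  "op_deg_le K A \<longleftrightarrow> (\<forall>m k. K < k \<longrightarrow> A m k = 0)"

lemma deg_leD: "deg_le d f \<Longrightarrow> f k \<noteq> 0 \<Longrightarrow> k \<le> d"
  unfolding deg_le_def by (meson not_le)

lemma op_deg_leD: "op_deg_le K A \<Longrightarrow> A m k \<noteq> 0 \<Longrightarrow> k \<le> K"
  unfolding op_deg_le_def by (meson not_le)

lemma deriv_coef_nonzero: "deg_le d f \<Longrightarrow> deriv_coef m f i \<noteq> 0 \<Longrightarrow> i + int m \<le> d"
  by (auto simp: deriv_coef_ffact dest: deg_leD)

lemma deg_le_mono: "deg_le d f \<Longrightarrow> d \<le> d' \<Longrightarrow> deg_le d' f"
  unfolding deg_le_def by auto

lemma op_deg_le_mono: "op_deg_le K A \<Longrightarrow> K \<le> K' \<Longrightarrow> op_deg_le K' A"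
  unfolding op_deg_le_def by auto

lemma Hset_iff_deg_le: "f \<in> Hset \<longleftrightarrow> (\<exists>d. deg_le d f)"
  unfolding deg_le_def Hset_def by auto

lemma Dset_if_op_deg_le: "op_deg_le K A \<Longrightarrow> A \<in> Dset"
  unfolding op_deg_le_def Dset_def Hset_def by auto

lemma deg_le_add: "deg_le d f \<Longrightarrow> deg_le d g \<Longrightarrow> deg_le d (\<lambda>k. f k + g k)"
  unfolding deg_le_def by auto

lemma deg_le_diff: "deg_le d f \<Longrightarrow> deg_le d g \<Longrightarrow> deg_le d (\<lambda>k. f k - g k)"
  unfolding deg_le_def by auto

lemma deg_le_scale: "deg_le d f \<Longrightarrow> deg_le d (\<lambda>k. c * f k)"
  unfolding deg_le_def by auto

lemma deg_le_sum: "(\<And>i. i < n \<Longrightarrow> deg_le d (v i)) \<Longrightarrow> deg_le d (\<lambda>k. \<Sum>i<n. c i * v i k)"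
  unfolding deg_le_def by auto

lemma deg_le_common:
  fixes n :: nat
  assumes "\<And>m. m < n \<Longrightarrow> a m \<in> Hset"
  shows "\<exists>d. \<forall>m<n. deg_le d (a m)"
  using assms
proof (induction n)
  case 0
  then show ?case by auto
next
  case (Suc n)
  then obtain d where d: "\<forall>m<n. deg_le d (a m)"
    by auto
  obtain d' where d': "deg_le d' (a n)"
    using Suc.prems Hset_iff_deg_le by blast
  have "\<forall>m<Suc n. deg_le (max d d') (a m)"
    using d d' by (auto simp: less_Suc_eq intro: deg_le_mono)
  then show ?case by blast
qed

lemma Sum_any_reindex_nonzero:
  fixes g :: "'a \<Rightarrow> 'c::comm_monoid_add" and h :: "'b \<Rightarrow> 'c"
  assumes inj: "inj_on \<phi> {x. h x \<noteq> 0}"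
    and eq: "\<And>x. h x \<noteq> 0 \<Longrightarrow> g (\<phi> x) = h x"
    and surj: "\<And>y. g y \<noteq> 0 \<Longrightarrow> \<exists>x. h x \<noteq> 0 \<and> y = \<phi> x"
  shows "Sum_any g = Sum_any h"
proof -
  have "bij_betw \<phi> {x. h x \<noteq> 0} {y. g y \<noteq> 0}"
    using inj eq surj unfolding bij_betw_def by force
  then have "sum g {y. g y \<noteq> 0} = sum (g \<circ> \<phi>) {x. h x \<noteq> 0}"
    by (simp add: sum.reindex_bij_betw)
  also have "\<dots> = sum h {x. h x \<noteq> 0}"
    by (rule sum.cong) (auto simp: eq)
  finally show ?thesis
    by (simp add: Sum_any.expand_set)
qed

lemma Sum_any_eq_sum:
  assumes "finite S" "\<And>x. g x \<noteq> 0 \<Longrightarrow> x \<in> S"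
  shows "Sum_any g = sum g S"
  using assms by (intro Sum_any.expand_superset) auto

lemma Sum_any_split_point:
  assumes "finite {x. h x \<noteq> 0}"
  shows "Sum_any h = h a + Sum_any (\<lambda>x. if x = a then 0 else h x)"
proof -
  have "Sum_any h = Sum_any (\<lambda>x. (if x = a then h x else 0) + (if x = a then 0 else h x))"
    by (rule Sum_any.cong) auto
  also have "\<dots> = Sum_any (\<lambda>x. if x = a then h x else 0) + Sum_any (\<lambda>x. if x = a then 0 else h x)"
    by (rule Sum_any.distrib) (auto intro: finite_subset[OF _ assms])
  finally show ?thesis by simp
qed

section \<open>The action of differential operators\<close>

lemma D_act_eq_sum:
  assumes "finite S" "\<And>m k. A m k * deriv_coef m f (i - k) \<noteq> 0 \<Longrightarrow> (m, k) \<in> S"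
  shows "D_act A f i = (\<Sum>(m, k)\<in>S. A m k * deriv_coef m f (i - k))"
  unfolding D_act_def by (rule Sum_any_eq_sum) (use assms in auto)

lemma D_act_term_nonzero:
  assumes "op_deg_le K A" "deg_le d f" "A m k * deriv_coef m f (i - k) \<noteq> 0"
  shows "k \<le> K" "i - k + int m \<le> d"
  using assms op_deg_leD[OF assms(1)] deg_leD[OF assms(2)] by (auto simp: deriv_coef_ffact)

definition act_support :: "int \<Rightarrow> int \<Rightarrow> int \<Rightarrow> (nat \<times> int) set" where
  "act_support d K i = {..nat (d + K - i)} \<times> {i - d..K}"

lemma finite_act_support [simp]: "finite (act_support d K i)"
  by (simp add: act_support_def)

lemma act_support_contains:
  assumes "op_deg_le K A" "deg_le d f" "A m k * deriv_coef m f (i - k) \<noteq> 0"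
  shows "(m, k) \<in> act_support d K i"
  using D_act_term_nonzero[OF assms] unfolding act_support_def by auto

lemma D_act_eq_sum_act_support:
  assumes "op_deg_le K A" "deg_le d f"
  shows "D_act A f i = (\<Sum>(m, k)\<in>act_support d K i. A m k * deriv_coef m f (i - k))"
  by (rule D_act_eq_sum) (auto intro: act_support_contains[OF assms])

lemma finite_D_act_terms:
  assumes "op_deg_le K A" "deg_le d f"
  shows "finite {x. (case x of (m, k) \<Rightarrow> A m k * deriv_coef m f (i - k)) \<noteq> 0}"
  by (rule finite_subset[OF _ finite_act_support[of d K i]])
    (auto intro: act_support_contains[OF assms])

lemma deg_le_D_act:
  assumes "op_deg_le K A" "deg_le d f"
  shows "deg_le (d + K) (D_act A f)"
  unfolding deg_le_def
proof (intro allI impI)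
  fix i assume "d + K < i"
  then have "act_support d K i = {}"
    by (auto simp: act_support_def)
  then show "D_act A f i = 0"
    by (simp add: D_act_eq_sum_act_support[OF assms])
qed

lemma D_act_add:
  assumes "op_deg_le K A" "deg_le d f" "deg_le d g"
  shows "D_act A (\<lambda>k. f k + g k) = (\<lambda>i. D_act A f i + D_act A g i)"
proof
  fix i
  show "D_act A (\<lambda>k. f k + g k) i = D_act A f i + D_act A g i"
    unfolding D_act_eq_sum_act_support[OF assms(1,2)] D_act_eq_sum_act_support[OF assms(1,3)]
      D_act_eq_sum_act_support[OF assms(1) deg_le_add[OF assms(2,3)]]
    by (simp add: deriv_coef_add sum.distrib[symmetric] distrib_left case_prod_beta)
qed

lemma D_act_scale:
  assumes "op_deg_le K A" "deg_le d f"
  shows "D_act A (\<lambda>k. c * f k) = (\<lambda>i. c * D_act A f i)"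
proof
  fix i
  show "D_act A (\<lambda>k. c * f k) i = c * D_act A f i"
    unfolding D_act_eq_sum_act_support[OF assms] D_act_eq_sum_act_support[OF assms(1) deg_le_scale[OF assms(2)]]
    by (simp add: deriv_coef_scale sum_distrib_left case_prod_beta algebra_simps)
qed

lemma D_act_zero: "D_act A (\<lambda>_. 0) = (\<lambda>_. 0)"
  by (simp add: D_act_def deriv_coef_def)

lemma D_act_zero_op: "D_act (\<lambda>_ _. 0) f = (\<lambda>_. 0)"
  by (simp add: D_act_def)

lemma D_act_diff:
  assumes "op_deg_le K A" "deg_le d f" "deg_le d g"
  shows "D_act A (\<lambda>k. f k - g k) = (\<lambda>i. D_act A f i - D_act A g i)"
proof -
  have "D_act A (\<lambda>k. f k - g k) = D_act A (\<lambda>k. f k + (-1) * g k)"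
    by simp
  also have "\<dots> = (\<lambda>i. D_act A f i + D_act A (\<lambda>k. (-1) * g k) i)"
    by (rule D_act_add[OF assms(1,2) deg_le_scale[OF assms(3)]])
  finally show ?thesis
    unfolding D_act_scale[OF assms(1,3)] by simp
qed

lemma D_act_sum:
  fixes n :: nat
  assumes A: "op_deg_le K A"
  shows "(\<And>i. i < n \<Longrightarrow> deg_le d (v i)) \<Longrightarrow>
    D_act A (\<lambda>k. \<Sum>i<n. c i * v i k) = (\<lambda>l. \<Sum>i<n. c i * D_act A (v i) l)"
proof (induction n)
  case 0
  then show ?case by (simp add: D_act_zero)
next
  case (Suc n)
  have "D_act A (\<lambda>k. (\<Sum>i<n. c i * v i k) + c n * v n k) =
      (\<lambda>l. D_act A (\<lambda>k. \<Sum>i<n. c i * v i k) l + D_act A (\<lambda>k. c n * v n k) l)"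
    by (rule D_act_add[OF A deg_le_sum deg_le_scale]) (use Suc.prems in auto)
  then show ?case
    using Suc by (simp add: D_act_scale[OF A, of d "v n"])
qed

lemma D_act_D_sub:
  assumes "op_deg_le K A" "op_deg_le K B" "deg_le d f"
  shows "D_act (D_sub A B) f = (\<lambda>i. D_act A f i - D_act B f i)"
proof
  fix i
  have AB: "op_deg_le K (D_sub A B)"
    using assms(1,2) unfolding op_deg_le_def D_sub_def by auto
  show "D_act (D_sub A B) f i = D_act A f i - D_act B f i"
    unfolding D_act_eq_sum_act_support[OF assms(1,3)] D_act_eq_sum_act_support[OF assms(2,3)]
      D_act_eq_sum_act_support[OF AB assms(3)]
    by (simp add: D_sub_def sum_subtractf[symmetric] case_prod_beta algebra_simps)
qed

section \<open>Products of differential operators\<close>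

definition leibniz_term :: "diffop \<Rightarrow> diffop \<Rightarrow> nat \<Rightarrow> int \<Rightarrow> nat \<Rightarrow> nat \<Rightarrow> int \<Rightarrow> complex" where
  "leibniz_term A B p l m j k = (if j \<le> m \<and> m \<le> p + j
      then A m k * of_nat (m choose j) * deriv_coef j (B (p + j - m)) (l - k) else 0)"

lemma D_mult_eq_Sum_any: "D_mult A B p l = Sum_any (\<lambda>(m, j, k). leibniz_term A B p l m j k)"
  unfolding D_mult_def leibniz_term_def by simp

lemma D_mult_eq_sum:
  assumes "finite S" "\<And>m j k. leibniz_term A B p l m j k \<noteq> 0 \<Longrightarrow> (m, j, k) \<in> S"
  shows "D_mult A B p l = (\<Sum>(m, j, k)\<in>S. leibniz_term A B p l m j k)"
  unfolding D_mult_eq_Sum_any by (rule Sum_any_eq_sum) (use assms in auto)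

lemma leibniz_term_nonzero:
  assumes "op_deg_le K1 A" "op_deg_le K2 B" "leibniz_term A B p l m j k \<noteq> 0"
  shows "j \<le> m" "m \<le> p + j" "k \<le> K1" "l - k + int j \<le> K2"
proof -
  from assms(3) have "j \<le> m \<and> m \<le> p + j"
    and nz: "A m k * of_nat (m choose j) * deriv_coef j (B (p + j - m)) (l - k) \<noteq> 0"
    unfolding leibniz_term_def by (auto split: if_splits)
  then show "j \<le> m" "m \<le> p + j"
    by auto
  from nz show "k \<le> K1"
    using op_deg_leD[OF assms(1)] by auto
  from nz have "B (p + j - m) (l - k + int j) \<noteq> 0"
    by (auto simp: deriv_coef_ffact)
  then show "l - k + int j \<le> K2"
    using op_deg_leD[OF assms(2)] by auto
qed

lemma op_deg_le_D_mult:
  assumes "op_deg_le K1 A" "op_deg_le K2 B"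
  shows "op_deg_le (K1 + K2) (D_mult A B)"
  unfolding op_deg_le_def
proof (intro allI impI)
  fix p l assume "K1 + K2 < l"
  then have "(\<lambda>(m, j, k). leibniz_term A B p l m j k) = (\<lambda>_. 0)"
    using leibniz_term_nonzero(3,4)[OF assms] by fastforce
  then show "D_mult A B p l = 0"
    unfolding D_mult_eq_Sum_any by simp
qed

lemma D_act_D_mult_eq_Sum_any:
  assumes A: "op_deg_le K1 A" and B: "op_deg_le K2 B" and f: "deg_le d f"
  shows "D_act (D_mult A B) f l =
    Sum_any (\<lambda>((p, k2), (m, j, k)). leibniz_term A B p k2 m j k * deriv_coef p f (l - k2))"
proof -
  define N where "N = nat (d + K1 + K2 - l)"
  define S1 where "S1 = {..N} \<times> {l - d..K1 + K2}"
  define S2 where "S2 = {..2 * N} \<times> ({..N} \<times> {l - d - K2..K1})"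
  have "D_act (D_mult A B) f l = (\<Sum>(p, k2)\<in>S1. D_mult A B p k2 * deriv_coef p f (l - k2))"
  proof (rule D_act_eq_sum)
    fix p k2 assume "D_mult A B p k2 * deriv_coef p f (l - k2) \<noteq> 0"
    from D_act_term_nonzero[OF op_deg_le_D_mult[OF A B] f this] show "(p, k2) \<in> S1"
      unfolding S1_def N_def by auto
  qed (simp add: S1_def)
  also have "\<dots> = (\<Sum>(p, k2)\<in>S1. \<Sum>(m, j, k)\<in>S2. leibniz_term A B p k2 m j k * deriv_coef p f (l - k2))"
  proof (rule sum.cong[OF refl], clarify)
    fix p k2 assume "(p, k2) \<in> S1"
    then have "D_mult A B p k2 = (\<Sum>(m, j, k)\<in>S2. leibniz_term A B p k2 m j k)"
    proof (intro D_mult_eq_sum)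
      fix m j k assume "leibniz_term A B p k2 m j k \<noteq> 0"
      from leibniz_term_nonzero[OF A B this] \<open>(p, k2) \<in> S1\<close> show "(m, j, k) \<in> S2"
        unfolding S1_def S2_def N_def by auto
    qed (simp add: S2_def)
    then show "D_mult A B p k2 * deriv_coef p f (l - k2) =
        (\<Sum>(m, j, k)\<in>S2. leibniz_term A B p k2 m j k * deriv_coef p f (l - k2))"
      by (simp add: sum_distrib_right case_prod_beta)
  qed
  also have "\<dots> = (\<Sum>x\<in>S1 \<times> S2. (\<lambda>((p, k2), (m, j, k)). leibniz_term A B p k2 m j k * deriv_coef p f (l - k2)) x)"
    by (simp add: sum.cartesian_product case_prod_beta)
  also have "\<dots> = Sum_any (\<lambda>((p, k2), (m, j, k)). leibniz_term A B p k2 m j k * deriv_coef p f (l - k2))"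
  proof (rule Sum_any_eq_sum[symmetric])
    fix x :: "(nat \<times> int) \<times> nat \<times> nat \<times> int"
    obtain p k2 m j k where x: "x = ((p, k2), (m, j, k))"
      by (metis prod.exhaust)
    assume "(\<lambda>((p, k2), (m, j, k)). leibniz_term A B p k2 m j k * deriv_coef p f (l - k2)) x \<noteq> 0"
    then have "leibniz_term A B p k2 m j k \<noteq> 0" "deriv_coef p f (l - k2) \<noteq> 0"
      unfolding x by auto
    with leibniz_term_nonzero[OF A B] deriv_coef_nonzero[OF f] show "x \<in> S1 \<times> S2"
      unfolding x S1_def S2_def N_def by fastforce
  qed (simp add: S1_def S2_def)
  finally show ?thesis .
qed

text \<open>The substitution \<open>n = p + j - m\<close>, \<open>k' = k2 - k + j\<close> makes \<open>(n, k')\<close> the index of the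
  coefficient of \<open>B\<close> occurring in the Leibniz expansion.\<close>
lemma Sum_any_leibniz_reindex:
  "Sum_any (\<lambda>((p, k2), (m, j, k)). leibniz_term A B p k2 m j k * c p k2) =
   Sum_any (\<lambda>((m, k), ((n, k'), j)). if j \<le> m
     then leibniz_term A B (n + m - j) (k + k' - int j) m j k * c (n + m - j) (k + k' - int j) else 0)"
  (is "Sum_any ?g = Sum_any ?h")
proof (rule Sum_any_reindex_nonzero)
  let ?\<phi> = "\<lambda>((m::nat, k::int), ((n::nat, k'::int), j::nat)). ((n + m - j, k + k' - int j), (m, j, k))"
  show "inj_on ?\<phi> {x. ?h x \<noteq> 0}"
    unfolding inj_on_def by (auto split: if_splits)
  show "?g (?\<phi> x) = ?h x" if "?h x \<noteq> 0" for x
    using that by (auto split: prod.splits if_splits)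
  show "\<exists>x. ?h x \<noteq> 0 \<and> y = ?\<phi> x" if nz: "?g y \<noteq> 0" for y
  proof -
    obtain p k2 m j k where y: "y = ((p, k2), (m, j, k))"
      by (metis prod.exhaust)
    with nz have "j \<le> m" "m \<le> p + j"
      by (auto simp: leibniz_term_def split: if_splits)
    then show ?thesis
      using nz unfolding y by (intro exI[of _ "((m, k), ((p + j - m, k2 - k + int j), j))"]) auto
  qed
qed

lemma sum_leibniz_term:
  "(\<Sum>j\<le>m. leibniz_term A B (n + m - j) (k + k' - int j) m j k * deriv_coef (n + m - j) f (l - (k + k' - int j)))
   = A m k * ffact (l - k + int m) m * (B n k' * deriv_coef n f (l - k + int m - k'))"
proof -
  define s where "s = l - k - k' + int n + int m"
  have "(\<Sum>j\<le>m. leibniz_term A B (n + m - j) (k + k' - int j) m j k * deriv_coef (n + m - j) f (l - (k + k' - int j)))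
      = (\<Sum>j\<le>m. A m k * B n k' * f s * (of_nat (m choose j) * ffact k' j * ffact s (n + (m - j))))"
  proof (rule sum.cong[OF refl])
    fix j assume "j \<in> {..m}"
    then have jm: "j \<le> m" by simp
    have e1: "n + m - j + j - m = n" and e2: "n + m - j = n + (m - j)"
      using jm by simp_all
    have e3: "l - (k + k' - int j) + int (n + m - j) = s"
      using jm by (simp add: s_def of_nat_diff)
    show "leibniz_term A B (n + m - j) (k + k' - int j) m j k * deriv_coef (n + m - j) f (l - (k + k' - int j))
        = A m k * B n k' * f s * (of_nat (m choose j) * ffact k' j * ffact s (n + (m - j)))"
      unfolding leibniz_term_def using jm
      by (simp add: e1 e3 deriv_coef_ffact flip: e2) (simp add: algebra_simps s_def)
  qed
  also have "\<dots> = A m k * B n k' * f s * ffact s n * ffact (k' + s - int n) m"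
    unfolding sum_distrib_left[symmetric] ffact_Leibniz by (simp only: mult.assoc)
  also have "\<dots> = A m k * ffact (l - k + int m) m * (B n k' * deriv_coef n f (l - k + int m - k'))"
    by (simp add: s_def deriv_coef_ffact algebra_simps)
  finally show ?thesis .
qed

lemma D_act_D_mult_eq_double_sum:
  assumes A: "op_deg_le K1 A" and B: "op_deg_le K2 B" and f: "deg_le d f"
  shows "D_act (D_mult A B) f l =
    (\<Sum>(m, k)\<in>act_support (d + K2) K1 l. \<Sum>(n, k')\<in>{..nat (d + K1 + K2 - l)} \<times> {l - d - K1..K2}.
       A m k * ffact (l - k + int m) m * (B n k' * deriv_coef n f (l - k + int m - k')))"
proof -
  define N where "N = nat (d + K1 + K2 - l)"
  define SA where "SA = act_support (d + K2) K1 l"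
  define SB where "SB = {..N} \<times> {l - d - K1..K2}"
  define T where "T = (\<lambda>((m, k), ((n, k'), j)). if j \<le> m
     then leibniz_term A B (n + m - j) (k + k' - int j) m j k * deriv_coef (n + m - j) f (l - (k + k' - int j))
     else 0)"
  have "D_act (D_mult A B) f l = Sum_any T"
    unfolding D_act_D_mult_eq_Sum_any[OF A B f] T_def by (rule Sum_any_leibniz_reindex)
  also have "\<dots> = sum T (SA \<times> (SB \<times> {..N}))"
  proof (rule Sum_any_eq_sum)
    fix x :: "(nat \<times> int) \<times> (nat \<times> int) \<times> nat"
    obtain m k n k' j where x: "x = ((m, k), ((n, k'), j))"
      by (metis prod.exhaust)
    assume "T x \<noteq> 0"
    then have jm: "j \<le> m" and nz: "leibniz_term A B (n + m - j) (k + k' - int j) m j k \<noteq> 0"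
      and "deriv_coef (n + m - j) f (l - (k + k' - int j)) \<noteq> 0"
      unfolding x by (auto simp: T_def split: if_splits)
    from this(3) have "l - (k + k' - int j) + int (n + m - j) \<le> d"
      using deriv_coef_nonzero[OF f] by blast
    with jm show "x \<in> SA \<times> (SB \<times> {..N})"
      using leibniz_term_nonzero[OF A B nz] unfolding x SA_def act_support_def SB_def N_def by (auto simp: of_nat_diff)
  qed (simp add: SA_def act_support_def SB_def)
  also have "\<dots> = (\<Sum>(m, k)\<in>SA. \<Sum>(n, k')\<in>SB. \<Sum>j\<le>N. T ((m, k), ((n, k'), j)))"
    by (simp add: sum.cartesian_product case_prod_beta)
  also have "\<dots> = (\<Sum>(m, k)\<in>SA. \<Sum>(n, k')\<in>SB. A m k * ffact (l - k + int m) m *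
      (B n k' * deriv_coef n f (l - k + int m - k')))"
  proof (rule sum.cong[OF refl], clarify, rule sum.cong[OF refl], clarify)
    fix m k n k' assume "(m, k) \<in> SA"
    then have "(\<Sum>j\<le>N. T ((m, k), ((n, k'), j))) = (\<Sum>j\<le>m. T ((m, k), ((n, k'), j)))"
      by (intro sum.mono_neutral_right) (auto simp: SA_def act_support_def N_def T_def)
    then show "(\<Sum>j\<le>N. T ((m, k), ((n, k'), j))) =
        A m k * ffact (l - k + int m) m * (B n k' * deriv_coef n f (l - k + int m - k'))"
      by (simp add: T_def sum_leibniz_term)
  qed
  finally show ?thesis
    unfolding SA_def SB_def N_def .
qed

lemma D_act_D_mult:
  assumes A: "op_deg_le K1 A" and B: "op_deg_le K2 B" and f: "deg_le d f"
  shows "D_act (D_mult A B) f = D_act A (D_act B f)"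
proof
  fix l
  define SA where "SA = act_support (d + K2) K1 l"
  define SB where "SB = {..nat (d + K1 + K2 - l)} \<times> {l - d - K1..K2}"
  have "D_act (D_mult A B) f l = (\<Sum>(m, k)\<in>SA. \<Sum>(n, k')\<in>SB.
      A m k * ffact (l - k + int m) m * (B n k' * deriv_coef n f (l - k + int m - k')))"
    unfolding SA_def SB_def by (rule D_act_D_mult_eq_double_sum[OF A B f])
  also have "\<dots> = (\<Sum>(m, k)\<in>SA. A m k * deriv_coef m (D_act B f) (l - k))"
  proof (rule sum.cong[OF refl], clarify)
    fix m k assume mk: "(m, k) \<in> SA"
    have "D_act B f (l - k + int m) = (\<Sum>(n, k')\<in>SB. B n k' * deriv_coef n f (l - k + int m - k'))"
    proof (rule D_act_eq_sum)
      fix n k' assume "B n k' * deriv_coef n f (l - k + int m - k') \<noteq> 0"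
      from D_act_term_nonzero[OF B f this] mk show "(n, k') \<in> SB"
        unfolding SA_def act_support_def SB_def by auto
    qed (simp add: SB_def)
    then show "(\<Sum>(n, k')\<in>SB. A m k * ffact (l - k + int m) m * (B n k' * deriv_coef n f (l - k + int m - k'))) =
        A m k * deriv_coef m (D_act B f) (l - k)"
      by (simp add: deriv_coef_ffact sum_distrib_left case_prod_beta mult.assoc)
  qed
  also have "\<dots> = D_act A (D_act B f) l"
    unfolding SA_def by (rule D_act_eq_sum_act_support[OF A deg_le_D_act[OF B f], symmetric])
  finally show "D_act (D_mult A B) f l = D_act A (D_act B f) l" .
qed

section \<open>Monomials and the basic operators\<close>

definition zpow :: "nat \<Rightarrow> laurent" where
  "zpow n = (\<lambda>k. if k = int n then 1 else 0)"

lemma deg_le_zpow: "deg_le (int n) (zpow n)"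
  unfolding deg_le_def zpow_def by auto

lemma zpow_Hplus: "zpow n \<in> Hplus"
  unfolding Hplus_def Hset_def zpow_def by auto

lemma D_act_zpow: "D_act A (zpow n) l = (\<Sum>m\<le>n. A m (l - int n + int m) * ffact (int n) m)"
proof -
  have "D_act A (zpow n) l =
      (\<Sum>(m, k)\<in>(\<lambda>m. (m, l - int n + int m)) ` {..n}. A m k * deriv_coef m (zpow n) (l - k))"
  proof (rule D_act_eq_sum)
    fix m k assume "A m k * deriv_coef m (zpow n) (l - k) \<noteq> 0"
    then have "l - k + int m = int n" and "ffact (int n) m \<noteq> 0"
      by (auto simp: deriv_coef_ffact zpow_def split: if_splits)
    then show "(m, k) \<in> (\<lambda>m. (m, l - int n + int m)) ` {..n}"
      using ffact_eq_0 by (auto intro!: image_eqI[of _ _ m] simp: not_le[symmetric])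
  qed simp
  also have "\<dots> = (\<Sum>m\<le>n. A m (l - int n + int m) * ffact (int n) m)"
    by (subst sum.reindex) (auto simp: inj_on_def deriv_coef_ffact zpow_def)
  finally show ?thesis .
qed

lemma D_act_zpow_top:
  "D_act A (zpow n) l = (\<Sum>m<n. A m (l - int n + int m) * ffact (int n) m) + A n l * ffact (int n) n"
  by (simp add: D_act_zpow lessThan_Suc_atMost[symmetric])

text \<open>An operator is determined by its action on monomials, since \<open>\<partial>\<^sup>m z\<^sup>n\<close> has the
  nonzero coefficient \<open>n!/(n-m)!\<close> for \<open>m \<le> n\<close>; the first \<open>N+1\<close> monomials
  determine the first \<open>N+1\<close> coefficients.\<close>
lemma diffop_coeff_eq_if_act_zpow_eq:
  assumes "\<And>n. n \<le> N \<Longrightarrow> D_act A (zpow n) = D_act B (zpow n)"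
  shows "m \<le> N \<Longrightarrow> A m = B m"
proof (induction m rule: less_induct)
  case (less m)
  show ?case
  proof
    fix k
    have "(\<Sum>m'<m. A m' (k - int m + int m') * ffact (int m) m') =
        (\<Sum>m'<m. B m' (k - int m + int m') * ffact (int m) m')"
      using less by (intro sum.cong) auto
    moreover have "D_act A (zpow m) k = D_act B (zpow m) k"
      using assms less.prems by simp
    ultimately have "A m k * ffact (int m) m = B m k * ffact (int m) m"
      by (simp add: D_act_zpow_top)
    then show "A m k = B m k"
      using ffact_nonzero[of m m] by simp
  qed
qed

lemma diffop_eq_if_act_zpow_eq:
  assumes "\<And>n. D_act A (zpow n) = D_act B (zpow n)"
  shows "A = B"
  using diffop_coeff_eq_if_act_zpow_eq[of _ A B] assms by blast

lemma op_deg_le_D_one: "op_deg_le 0 D_one"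
  by (simp add: op_deg_le_def D_one_def)

lemma op_deg_le_D_z: "op_deg_le 1 D_z"
  by (simp add: op_deg_le_def D_z_def)

lemma op_deg_le_D_del: "op_deg_le 0 D_del"
  by (simp add: op_deg_le_def D_del_def)

lemma D_act_D_one: "D_act D_one f = f"
proof
  fix l
  have "(\<lambda>(m, k). D_one m k * deriv_coef m f (l - k)) = (\<lambda>x. if x = (0, 0) then f l else 0)"
    by (auto simp: fun_eq_iff D_one_def deriv_coef_def)
  then show "D_act D_one f l = f l"
    unfolding D_act_def by simp
qed

lemma D_act_D_z: "D_act D_z f = (\<lambda>l. f (l - 1))"
proof
  fix l
  have "(\<lambda>(m, k). D_z m k * deriv_coef m f (l - k)) = (\<lambda>x. if x = (0, 1) then f (l - 1) else 0)"
    by (auto simp: fun_eq_iff D_z_def deriv_coef_def)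
  then show "D_act D_z f l = f (l - 1)"
    unfolding D_act_def by simp
qed

lemma D_act_D_del: "D_act D_del f = (\<lambda>l. of_int (l + 1) * f (l + 1))"
proof
  fix l
  have "(\<lambda>(m, k). D_del m k * deriv_coef m f (l - k)) =
      (\<lambda>x. if x = (1, 0) then of_int (l + 1) * f (l + 1) else 0)"
    by (auto simp: fun_eq_iff D_del_def deriv_coef_def)
  then show "D_act D_del f l = of_int (l + 1) * f (l + 1)"
    unfolding D_act_def by simp
qed

lemma D_act_D_z_zpow: "D_act D_z (zpow n) = zpow (Suc n)"
  by (auto simp: D_act_D_z zpow_def fun_eq_iff)

lemma D_act_D_del_zpow_0: "D_act D_del (zpow 0) = (\<lambda>_. 0)"
  by (auto simp: D_act_D_del zpow_def fun_eq_iff simp del: of_int_add)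

lemma D_act_D_del_zpow_Suc: "D_act D_del (zpow (Suc n)) = (\<lambda>l. of_nat (Suc n) * zpow n l)"
  by (auto simp: D_act_D_del zpow_def fun_eq_iff)

lemma D_act_D_del_D_z_commutator: "D_act D_del (D_act D_z y) l - D_act D_z (D_act D_del y) l = y l"
  by (simp add: D_act_D_del D_act_D_z algebra_simps)

lemma D_mult_assoc:
  assumes "op_deg_le K1 A" "op_deg_le K2 B" "op_deg_le K3 C"
  shows "D_mult (D_mult A B) C = D_mult A (D_mult B C)"
proof (rule diffop_eq_if_act_zpow_eq)
  fix n
  have "deg_le (int n + K3) (D_act C (zpow n))"
    by (rule deg_le_D_act[OF assms(3) deg_le_zpow])
  then show "D_act (D_mult (D_mult A B) C) (zpow n) = D_act (D_mult A (D_mult B C)) (zpow n)"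
    using D_act_D_mult[OF op_deg_le_D_mult[OF assms(1,2)] assms(3) deg_le_zpow]
      D_act_D_mult[OF assms(1) op_deg_le_D_mult[OF assms(2,3)] deg_le_zpow]
      D_act_D_mult[OF assms(1,2)] D_act_D_mult[OF assms(2,3) deg_le_zpow]
    by simp
qed

lemma D_mult_D_one_right: "op_deg_le K A \<Longrightarrow> D_mult A D_one = A"
  by (rule diffop_eq_if_act_zpow_eq) (simp add: D_act_D_mult[OF _ op_deg_le_D_one deg_le_zpow] D_act_D_one)

lemma op_deg_le_D_pow: "op_deg_le K Q \<Longrightarrow> op_deg_le (int n * K) (D_pow Q n)"
proof (induction n)
  case 0
  then show ?case using op_deg_le_D_one by simp
next
  case (Suc n)
  then have "op_deg_le (K + int n * K) (D_pow Q (Suc n))"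
    using op_deg_le_D_mult by simp
  then show ?case
    by (simp add: algebra_simps)
qed

lemma D_mult_D_del_left:
  "D_mult D_del B p l = (if 1 \<le> p then B (p - 1) l else 0) + of_int (l + 1) * B p (l + 1)"
proof -
  have "D_mult D_del B p l = (\<Sum>(m, j, k)\<in>{(1, 0, 0), (1, 1, 0)}. leibniz_term D_del B p l m j k)"
  proof (rule D_mult_eq_sum)
    fix m j k assume "leibniz_term D_del B p l m j k \<noteq> 0"
    then have "D_del m k \<noteq> 0" "j \<le> m"
      by (auto simp: leibniz_term_def split: if_splits)
    then show "(m, j, k) \<in> {(1, 0, 0), (1, 1, 0)}"
      by (auto simp: D_del_def split: if_splits)
  qed simp
  then show ?thesis
    by (simp add: leibniz_term_def D_del_def deriv_coef_def)
qed

lemma D_mult_D_del_right: "D_mult A D_del p l = (if 1 \<le> p then A (p - 1) l else 0)"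
proof -
  have "D_mult A D_del p l = (\<Sum>(m, j, k)\<in>{(p - 1, 0, l)}. leibniz_term A D_del p l m j k)"
  proof (rule D_mult_eq_sum)
    fix m j k assume "leibniz_term A D_del p l m j k \<noteq> 0"
    then have "j \<le> m" "m \<le> p + j" "deriv_coef j (D_del (p + j - m)) (l - k) \<noteq> 0"
      by (auto simp: leibniz_term_def split: if_splits)
    moreover from this(3) have "p + j - m = 1" "l - k + int j = 0" "ffact 0 j \<noteq> 0"
      by (auto simp: deriv_coef_ffact D_del_def split: if_splits)
    moreover from this(3) have "j = 0"
      using ffact_eq_0[of 0 j] by (cases j) auto
    ultimately show "(m, j, k) \<in> {(p - 1, 0, l)}"
      by auto
  qed simp
  then show ?thesis
    by (cases p) (simp_all add: leibniz_term_def D_del_def deriv_coef_def)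
qed

lemma D_mult_D_z_left: "D_mult D_z B p l = B p (l - 1)"
proof -
  have "D_mult D_z B p l = (\<Sum>(m, j, k)\<in>{(0, 0, 1)}. leibniz_term D_z B p l m j k)"
  proof (rule D_mult_eq_sum)
    fix m j k assume "leibniz_term D_z B p l m j k \<noteq> 0"
    then have "D_z m k \<noteq> 0" "j \<le> m"
      by (auto simp: leibniz_term_def split: if_splits)
    then show "(m, j, k) \<in> {(0, 0, 1)}"
      by (auto simp: D_z_def split: if_splits)
  qed simp
  then show ?thesis
    by (simp add: leibniz_term_def D_z_def deriv_coef_def)
qed

lemma D_mult_D_z_right: "D_mult A D_z p l = A p (l - 1) + of_nat (p + 1) * A (p + 1) l"
proof -
  have "D_mult A D_z p l = (\<Sum>(m, j, k)\<in>{(p, 0, l - 1), (p + 1, 1, l)}. leibniz_term A D_z p l m j k)"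
  proof (rule D_mult_eq_sum)
    fix m j k assume "leibniz_term A D_z p l m j k \<noteq> 0"
    then have "j \<le> m" "m \<le> p + j" "deriv_coef j (D_z (p + j - m)) (l - k) \<noteq> 0"
      by (auto simp: leibniz_term_def split: if_splits)
    moreover from this(3) have "p + j - m = 0" "l - k + int j = 1" "ffact 1 j \<noteq> 0"
      by (auto simp: deriv_coef_ffact D_z_def split: if_splits)
    moreover from this(3) have "j \<le> 1"
      using ffact_eq_0[of 1 j] by (cases "j \<le> 1") auto
    ultimately show "(m, j, k) \<in> {(p, 0, l - 1), (p + 1, 1, l)}"
      by (cases j) auto
  qed simp
  then show ?thesis
    by (simp add: leibniz_term_def D_z_def deriv_coef_def)
qed

section \<open>The group of operators \<open>1 + \<D>\<^sub>-\<close>\<close>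

lemma Gcal_coeff: "G \<in> Gcal \<Longrightarrow> 0 \<le> k \<Longrightarrow> G m k = D_one m k"
  unfolding Gcal_def Dminus_def D_sub_def by auto

lemma op_deg_le_Gcal: "G \<in> Gcal \<Longrightarrow> op_deg_le 0 G"
  unfolding op_deg_le_def by (auto simp: Gcal_coeff D_one_def)

lemma Gcal_coeff_nonzero: "G \<in> Gcal \<Longrightarrow> G m k \<noteq> 0 \<Longrightarrow> (m, k) \<noteq> (0, 0) \<Longrightarrow> k < 0"
  by (cases "0 \<le> k") (auto simp: Gcal_coeff D_one_def)

lemma Gcal_iff_coeffs:
  "G \<in> Gcal \<longleftrightarrow> (\<forall>m. G m \<in> Hset) \<and> (\<forall>m k. 0 \<le> k \<longrightarrow> G m k = D_one m k)"
  unfolding Gcal_def Dset_def Dminus_def D_sub_def by auto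

definition Gcal_lower :: "diffop \<Rightarrow> laurent \<Rightarrow> int \<Rightarrow> complex" where
  "Gcal_lower G g l = Sum_any (\<lambda>(m, k). if (m, k) = (0, 0) then 0 else G m k * deriv_coef m g (l - k))"

lemma D_act_Gcal:
  assumes "G \<in> Gcal" "deg_le T g"
  shows "D_act G g l = g l + Gcal_lower G g l"
proof -
  have "D_act G g l = (case (0::nat, 0::int) of (m, k) \<Rightarrow> G m k * deriv_coef m g (l - k))
     + Sum_any (\<lambda>x. if x = (0, 0) then 0 else (case x of (m, k) \<Rightarrow> G m k * deriv_coef m g (l - k)))"
    unfolding D_act_def
    by (rule Sum_any_split_point[OF finite_D_act_terms[OF op_deg_le_Gcal[OF assms(1)] assms(2)]])
  moreover have "G 0 0 = 1"
    using Gcal_coeff[OF assms(1), of 0 0] by (simp add: D_one_def)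
  moreover have "Sum_any (\<lambda>x. if x = (0, 0) then 0 else (case x of (m, k) \<Rightarrow> G m k * deriv_coef m g (l - k)))
      = Gcal_lower G g l"
    unfolding Gcal_lower_def by (rule Sum_any.cong) (auto split: prod.splits)
  ultimately show ?thesis
    by (simp add: deriv_coef_def)
qed

lemma Gcal_lower_local:
  assumes "G \<in> Gcal"
  shows "Gcal_lower G g l = Gcal_lower G (\<lambda>i. if l < i then g i else 0) l"
  unfolding Gcal_lower_def
proof (rule Sum_any.cong, clarify)
  fix m k
  have "k < 0" if "(m, k) \<noteq> (0, 0)" "G m k \<noteq> 0"
    using Gcal_coeff_nonzero[OF assms] that by blast
  then show "(if (m, k) = (0, 0) then 0 else G m k * deriv_coef m g (l - k)) =
      (if (m, k) = (0, 0) then 0 else G m k * deriv_coef m (\<lambda>i. if l < i then g i else 0) (l - k))"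
    by (cases "(m, k) = (0, 0) \<or> G m k = 0") (auto simp: deriv_coef_ffact)
qed

lemma Gcal_lower_zero: "Gcal_lower G (\<lambda>_. 0) l = 0"
proof -
  have "(\<lambda>(m, k). if (m, k) = (0, 0) then 0 else G m k * deriv_coef m (\<lambda>_. 0) (l - k)) = (\<lambda>_. 0::complex)"
    by (auto simp: fun_eq_iff deriv_coef_def)
  then show ?thesis
    unfolding Gcal_lower_def by simp
qed

lemma D_act_Gcal_top:
  assumes "G \<in> Gcal" "deg_le T g" "\<And>i. l < i \<Longrightarrow> g i = 0"
  shows "D_act G g l = g l"
proof -
  have "(\<lambda>i. if l < i then g i else 0) = (\<lambda>_. 0)"
    using assms(3) by auto
  then have "Gcal_lower G g l = 0"
    using Gcal_lower_local[OF assms(1), of g l] Gcal_lower_zero by simp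
  then show ?thesis
    using D_act_Gcal[OF assms(1,2)] by simp
qed

lemma vanishes_by_descending_induction:
  assumes "deg_le T g" and step: "\<And>l. L \<le> l \<Longrightarrow> (\<And>i. l < i \<Longrightarrow> g i = 0) \<Longrightarrow> g l = 0"
  shows "L \<le> l \<Longrightarrow> g l = 0"
proof (induction "nat (T - l)" arbitrary: l rule: less_induct)
  case less
  show ?case
  proof (rule step[OF less.prems])
    fix i assume "l < i"
    show "g i = 0"
    proof (cases "i \<le> T")
      case True
      then show ?thesis
        using less.hyps[of i] \<open>l < i\<close> less.prems by simp
    next
      case False
      then show ?thesis
        using assms(1) by (simp add: deg_le_def)
    qed
  qed
qed

lemma Gcal_act_eq_zero:
  assumes "G \<in> Gcal" "deg_le T g" "D_act G g = (\<lambda>_. 0)"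
  shows "g = (\<lambda>_. 0)"
proof
  fix l
  show "g l = 0"
  proof (rule vanishes_by_descending_induction[OF assms(2), of l])
    fix l' assume "\<And>i. l' < i \<Longrightarrow> g i = 0"
    from D_act_Gcal_top[OF assms(1,2) this] assms(3) show "g l' = 0"
      by metis
  qed simp
qed

lemma Gcal_act_vanishes_on_nonneg:
  assumes "G \<in> Gcal" "deg_le T g" "\<And>l. 0 \<le> l \<Longrightarrow> D_act G g l = 0" "0 \<le> l"
  shows "g l = 0"
proof (rule vanishes_by_descending_induction[OF assms(2), of 0 l])
  fix l' assume "0 \<le> l'" "\<And>i. l' < i \<Longrightarrow> g i = 0"
  from D_act_Gcal_top[OF assms(1,2) this(2)] assms(3)[OF this(1)] show "g l' = 0"
    by simp
qed (use assms in auto)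

lemma Gcal_act_inj:
  assumes "G \<in> Gcal" "deg_le T f" "deg_le T g" "D_act G f = D_act G g"
  shows "f = g"
proof -
  have "D_act G (\<lambda>k. f k - g k) = (\<lambda>_. 0)"
    using D_act_diff[OF op_deg_le_Gcal[OF assms(1)] assms(2,3)] assms(4) by simp
  then have "(\<lambda>k. f k - g k) = (\<lambda>_. 0)"
    using Gcal_act_eq_zero[OF assms(1) deg_le_diff[OF assms(2,3)]] by blast
  then show ?thesis
    by (auto simp: fun_eq_iff)
qed

lemma nat_strong_rec_exists: "\<exists>a. \<forall>n::nat. a n = F n (\<lambda>m. if m < n then a m else undefined)"
proof -
  define a where "a = wfrec less_than (\<lambda>f n. F n (\<lambda>m. if m < n then f m else undefined))"
  have "a n = F n (\<lambda>m. if m < n then a m else undefined)" for n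
  proof -
    have "a n = F n (\<lambda>m. if m < n then cut a less_than n m else undefined)"
      unfolding a_def by (subst wfrec[OF wf_less_than]) simp
    also have "(\<lambda>m. if m < n then cut a less_than n m else undefined) =
        (\<lambda>m. if m < n then a m else undefined)"
      by (auto simp: fun_eq_iff cut_apply)
    finally show ?thesis .
  qed
  then show ?thesis by blast
qed

lemma int_descending_rec_exists:
  "\<exists>v::int \<Rightarrow> 'a::zero. (\<forall>l. T < l \<longrightarrow> v l = 0) \<and> (\<forall>l\<le>T. v l = F l (\<lambda>i. if l < i then v i else 0))"
proof -
  define F' where "F' = (\<lambda>n g. F (T - int n) (\<lambda>i. if T - int n < i \<and> i \<le> T then g (nat (T - i)) else 0))"
  obtain w where w: "\<And>n. w n = F' n (\<lambda>m. if m < n then w m else undefined)"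
    using nat_strong_rec_exists[of F'] by blast
  define v where "v l = (if T < l then 0 else w (nat (T - l)))" for l
  have "v l = F l (\<lambda>i. if l < i then v i else 0)" if l: "l \<le> T" for l
  proof -
    have "v l = F l (\<lambda>i. if l < i \<and> i \<le> T
        then (if nat (T - i) < nat (T - l) then w (nat (T - i)) else undefined) else 0)"
      unfolding v_def using l by (subst w) (simp add: F'_def)
    also have "(\<lambda>i. if l < i \<and> i \<le> T then (if nat (T - i) < nat (T - l) then w (nat (T - i)) else undefined) else 0)
       = (\<lambda>i. if l < i then v i else 0)"
      by (auto simp: v_def fun_eq_iff)
    finally show ?thesis .
  qed
  moreover have "\<forall>l. T < l \<longrightarrow> v l = 0"
    by (simp add: v_def)
  ultimately show ?thesis by blast
qed

text \<open>Since \<open>G = 1 + (lower order)\<close>, the equation \<open>G v = y\<close> is solved by descending recursion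
  on the exponent.\<close>
lemma Gcal_act_surj:
  assumes G: "G \<in> Gcal" and y: "deg_le T y"
  shows "\<exists>v. deg_le T v \<and> D_act G v = y"
proof -
  obtain v :: laurent where v_top: "\<forall>l. T < l \<longrightarrow> v l = 0"
    and v_rec: "\<forall>l\<le>T. v l = y l - Gcal_lower G (\<lambda>i. if l < i then v i else 0) l"
    using int_descending_rec_exists[of T "\<lambda>l g. y l - Gcal_lower G g l"] by blast
  have v: "deg_le T v"
    using v_top by (simp add: deg_le_def)
  have "D_act G v l = y l" for l
  proof (cases "T < l")
    case True
    then show ?thesis
      using deg_le_D_act[OF op_deg_le_Gcal[OF G] v] y by (simp add: deg_le_def)
  next
    case False
    then show ?thesis
      using v_rec Gcal_lower_local[OF G, of v l] D_act_Gcal[OF G v] by simp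
  qed
  with v show ?thesis by blast
qed

text \<open>The coefficients are determined column by column from the triangular formula
  \<open>D_act_zpow_top\<close>.\<close>
lemma diffop_with_zpow_images:
  assumes u: "\<And>n. deg_le (int n) (u n)"
  shows "\<exists>a. (\<forall>n. deg_le (int n) (a n)) \<and> (\<forall>n. D_act a (zpow n) = u n)"
proof -
  define F where "F n g = (\<lambda>l. (u n l - (\<Sum>m<n. g m (l - int n + int m) * ffact (int n) m)) / ffact (int n) n)"
    for n :: nat and g :: "nat \<Rightarrow> laurent"
  obtain a where a0: "\<And>n. a n = F n (\<lambda>m. if m < n then a m else undefined)"
    using nat_strong_rec_exists[of F] by blast
  have a: "a n l = (u n l - (\<Sum>m<n. a m (l - int n + int m) * ffact (int n) m)) / ffact (int n) n" for n l
    by (subst a0) (simp add: F_def)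
  have deg_a: "deg_le (int n) (a n)" for n
  proof (induction n rule: less_induct)
    case (less n)
    show ?case
      unfolding deg_le_def
    proof (intro allI impI)
      fix l assume l: "int n < l"
      have "(\<Sum>m<n. a m (l - int n + int m) * ffact (int n) m) = 0"
        using less.IH l by (intro sum.neutral) (simp add: deg_le_def)
      moreover have "u n l = 0"
        using u[of n] l by (simp add: deg_le_def)
      ultimately show "a n l = 0"
        using a[of n l] by simp
    qed
  qed
  have "D_act a (zpow n) l = u n l" for n l
    using ffact_nonzero[of n n] a[of n l] by (simp add: D_act_zpow_top)
  with deg_a show ?thesis by blast
qed

definition trunc :: "nat \<Rightarrow> diffop \<Rightarrow> diffop" where
  "trunc N a = (\<lambda>m. if m \<le> N then a m else (\<lambda>_. 0))"

lemma op_deg_le_trunc: "(\<And>m. deg_le (int m) (a m)) \<Longrightarrow> op_deg_le (int N) (trunc N a)"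
  unfolding op_deg_le_def trunc_def deg_le_def by auto

lemma D_act_trunc_zpow: "n \<le> N \<Longrightarrow> D_act (trunc N a) (zpow n) = D_act a (zpow n)"
  by (auto simp: fun_eq_iff D_act_zpow trunc_def)

lemma D_mult_Gcal_eq_D_act_column:
  assumes G: "G \<in> Gcal" and B: "\<And>i l'. i < p \<Longrightarrow> 1 \<le> l' \<Longrightarrow> B i l' = 0" and l: "0 \<le> l"
  shows "D_mult G B p l = D_act G (B p) l"
proof -
  have column: "leibniz_term G B p l m j k = (if j = m then G m k * deriv_coef m (B p) (l - k) else 0)" for m j k
  proof (cases "j < m \<and> m \<le> p + j \<and> G m k \<noteq> 0")
    case True
    then have "k < 0"
      using Gcal_coeff_nonzero[OF G] by blast
    then have "B (p + j - m) (l - k + int j) = 0"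
      using True l by (intro B) auto
    then show ?thesis
      using True by (simp add: leibniz_term_def deriv_coef_ffact)
  qed (auto simp: leibniz_term_def)
  have "D_mult G B p l = Sum_any (\<lambda>(m, j, k). if j = m then G m k * deriv_coef m (B p) (l - k) else 0)"
    unfolding D_mult_eq_Sum_any column ..
  also have "\<dots> = D_act G (B p) l"
    unfolding D_act_def
    by (rule Sum_any_reindex_nonzero[where \<phi> = "\<lambda>(m, k). (m, m, k)"])
      (auto simp: inj_on_def split: prod.splits if_splits)
  finally show ?thesis .
qed

lemma deg_le_Gcal_zpow: "G \<in> Gcal \<Longrightarrow> deg_le (int n) (D_act G (zpow n))"
  using deg_le_D_act[OF op_deg_le_Gcal deg_le_zpow] by (metis add.right_neutral)

text \<open>A right inverse \<open>a\<close> of \<open>G\<close>, built column by column from the solutions of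
  \<open>G v\<^sub>n = z\<^sup>n\<close>, has no nonnegative powers of \<open>z\<close> in its higher columns: comparing
  \<open>\<partial>\<^sup>N\<close>-coefficients in \<open>G a = 1\<close> turns this into an equation \<open>G a\<^sub>N = (negative part)\<close>.\<close>
lemma Gcal_right_inverse_column:
  assumes G: "G \<in> Gcal" and a: "\<And>n. deg_le (int n) (a n)"
    and inv: "\<And>n. D_act G (D_act a (zpow n)) = zpow n"
  shows "1 \<le> N \<Longrightarrow> 0 \<le> l \<Longrightarrow> a N l = 0"
proof (induction N arbitrary: l rule: less_induct)
  case (less N)
  have lower: "trunc N a i l' = 0" if "i < N" "1 \<le> l'" for i l'
    using a[of 0] less.IH[of i l'] that by (cases "i = 0") (auto simp: trunc_def deg_le_def)
  have aN: "op_deg_le (int N) (trunc N a)"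
    by (rule op_deg_le_trunc[OF a])
  have "D_sub (D_mult G (trunc N a)) D_one m = (\<lambda>_ _. 0) m" if "m \<le> N" for m
  proof (rule diffop_coeff_eq_if_act_zpow_eq[OF _ that])
    fix n assume n: "n \<le> N"
    have GaN: "op_deg_le (int N) (D_mult G (trunc N a))"
      using op_deg_le_D_mult[OF op_deg_le_Gcal[OF G] aN] by simp
    have oneN: "op_deg_le (int N) D_one"
      using op_deg_le_mono[OF op_deg_le_D_one] by simp
    show "D_act (D_sub (D_mult G (trunc N a)) D_one) (zpow n) = D_act (\<lambda>_ _. 0) (zpow n)"
      unfolding D_act_D_sub[OF GaN oneN deg_le_zpow] D_act_D_mult[OF op_deg_le_Gcal[OF G] aN deg_le_zpow]
        D_act_trunc_zpow[OF n] inv D_act_D_one D_act_zero_op by simp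
  qed
  then have "D_mult G (trunc N a) N l' = 0" for l'
    using less.prems by (simp add: fun_eq_iff D_sub_def D_one_def)
  moreover have "D_mult G (trunc N a) N l' = D_act G (a N) l'" if "0 \<le> l'" for l'
    using D_mult_Gcal_eq_D_act_column[OF G lower that] by (simp add: trunc_def)
  ultimately show ?case
    using Gcal_act_vanishes_on_nonneg[OF G a] less.prems by metis
qed

lemma G_inv_exists:
  assumes G: "G \<in> Gcal"
  shows "\<exists>G'. G' \<in> Gcal \<and> D_mult G G' = D_one"
proof -
  obtain v where v: "\<And>n. deg_le (int n) (v n)" "\<And>n. D_act G (v n) = zpow n"
    using Gcal_act_surj[OF G deg_le_zpow] by metis
  obtain a where a: "\<And>n. deg_le (int n) (a n)" and av: "\<And>n. D_act a (zpow n) = v n"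
    using diffop_with_zpow_images[of v] v(1) by blast
  have inv: "D_act G (D_act a (zpow n)) = zpow n" for n
    using av v(2) by simp
  have "a 0 = v 0"
    using av[of 0] by (simp add: fun_eq_iff D_act_zpow)
  moreover have "D_act G (v 0) 0 = v 0 0"
    by (rule D_act_Gcal_top[OF G v(1)]) (use v(1)[of 0] in \<open>auto simp: deg_le_def\<close>)
  ultimately have "a 0 0 = 1"
    using v(2)[of 0] by (simp add: zpow_def)
  moreover have "a 0 k = 0" if "0 < k" for k
    using a[of 0] that by (simp add: deg_le_def)
  ultimately have "a m k = D_one m k" if "0 \<le> k" for m k
    using Gcal_right_inverse_column[OF G a inv, of m k] that
    by (cases "m = 0"; cases "k = 0") (auto simp: D_one_def)
  then have aG: "a \<in> Gcal"
    using a unfolding Gcal_iff_coeffs Hset_iff_deg_le by blast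
  have "D_mult G a = D_one"
    by (rule diffop_eq_if_act_zpow_eq)
      (simp add: D_act_D_mult[OF op_deg_le_Gcal[OF G] op_deg_le_Gcal[OF aG] deg_le_zpow] inv D_act_D_one)
  with aG show ?thesis by blast
qed

lemma G_inv:
  assumes G: "G \<in> Gcal"
  shows "G_inv G \<in> Gcal" "D_mult G (G_inv G) = D_one"
proof -
  have "G1 = G2" if "G1 \<in> Gcal" "D_mult G G1 = D_one" "G2 \<in> Gcal" "D_mult G G2 = D_one" for G1 G2
  proof (rule diffop_eq_if_act_zpow_eq)
    fix n
    have "D_act G (D_act G1 (zpow n)) = D_act G (D_act G2 (zpow n))"
      using D_act_D_mult[OF op_deg_le_Gcal[OF G] op_deg_le_Gcal[OF that(1)] deg_le_zpow]
        D_act_D_mult[OF op_deg_le_Gcal[OF G] op_deg_le_Gcal[OF that(3)] deg_le_zpow] that(2,4)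
      by simp
    then show "D_act G1 (zpow n) = D_act G2 (zpow n)"
      by (rule Gcal_act_inj[OF G deg_le_Gcal_zpow[OF that(1)] deg_le_Gcal_zpow[OF that(3)]])
  qed
  then have "\<exists>!G'. G' \<in> Gcal \<and> D_mult G G' = D_one"
    using G_inv_exists[OF G] by blast
  then have "G_inv G \<in> Gcal \<and> D_mult G (G_inv G) = D_one"
    unfolding G_inv_def by (rule theI')
  then show "G_inv G \<in> Gcal" "D_mult G (G_inv G) = D_one"
    by auto
qed

lemma G_inv_right_act:
  assumes G: "G \<in> Gcal" and y: "deg_le T y"
  shows "D_act G (D_act (G_inv G) y) = y"
  using D_act_D_mult[OF op_deg_le_Gcal[OF G] op_deg_le_Gcal[OF G_inv(1)[OF G]] y] G_inv(2)[OF G]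
  by (simp add: D_act_D_one)

lemma G_inv_left_act:
  assumes G: "G \<in> Gcal" and y: "deg_le T y"
  shows "D_act (G_inv G) (D_act G y) = y"
proof (rule Gcal_act_inj[OF G])
  show "deg_le T (D_act (G_inv G) (D_act G y))"
    using deg_le_D_act[OF op_deg_le_Gcal[OF G_inv(1)[OF G]] deg_le_D_act[OF op_deg_le_Gcal[OF G] y]] by simp
  show "D_act G (D_act (G_inv G) (D_act G y)) = D_act G y"
    by (rule G_inv_right_act[OF G deg_le_D_act[OF op_deg_le_Gcal[OF G] y]])
qed (rule y)

section \<open>The big cell of the Sato Grassmannian\<close>

lemma Hplus_deg_le: "p \<in> Hplus \<Longrightarrow> \<exists>T. deg_le T p"
  unfolding Hplus_def by (auto simp: Hset_iff_deg_le)

lemma Hplus_common_deg_le: "p \<in> Hplus \<Longrightarrow> q \<in> Hplus \<Longrightarrow> \<exists>T. deg_le T p \<and> deg_le T q"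
  by (metis Hplus_deg_le deg_le_mono max.cobounded1 max.cobounded2)

lemma Hplus_negative: "p \<in> Hplus \<Longrightarrow> k < 0 \<Longrightarrow> p k = 0"
  unfolding Hplus_def by auto

lemma Hplus_add: "p \<in> Hplus \<Longrightarrow> q \<in> Hplus \<Longrightarrow> (\<lambda>k. p k + q k) \<in> Hplus"
  using Hplus_common_deg_le[of p q] deg_le_add[of _ p q]
  unfolding Hplus_def Hset_iff_deg_le by auto

lemma Hplus_scale: "p \<in> Hplus \<Longrightarrow> (\<lambda>k. c * p k) \<in> Hplus"
  unfolding Hplus_def Hset_def by auto

lemma zero_Hplus: "(\<lambda>_. 0) \<in> Hplus"
  unfolding Hplus_def Hset_def by auto

lemma proj_plus_Hplus: "f \<in> Hset \<Longrightarrow> proj_plus f \<in> Hplus"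
  unfolding proj_plus_def Hplus_def Hset_def by auto

lemma Hplus_eq_sum_zpow:
  assumes p: "p \<in> Hplus"
  shows "\<exists>N. p = (\<lambda>k. \<Sum>i<N. p (int i) * zpow i k)"
proof -
  obtain T where T: "deg_le T p"
    using Hplus_deg_le[OF p] by blast
  define N where "N = nat T + 1"
  have "p k = (\<Sum>i<N. p (int i) * zpow i k)" for k
  proof (cases "k < 0")
    case True
    then show ?thesis
      using Hplus_negative[OF p] by (auto simp: zpow_def intro!: sum.neutral)
  next
    case False
    then obtain j where j: "k = int j"
      by (metis nonneg_eq_int not_less)
    have "(\<Sum>i<N. p (int i) * zpow i k) = (\<Sum>i<N. if i = j then p (int j) else 0)"
      by (rule sum.cong) (auto simp: zpow_def j)
    also have "\<dots> = p k"
      using T j by (auto simp: N_def deg_le_def)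
    finally show ?thesis by simp
  qed
  then show ?thesis by blast
qed

lemma sum_zpow_Hplus:
  fixes n :: nat
  shows "(\<lambda>k. \<Sum>i<n. c i * zpow (f i) k) \<in> Hplus"
proof -
  have "(\<Sum>i<n. c i * zpow (f i) k) = 0" if "int (\<Sum>i<n. f i) < k \<or> k < 0" for k
  proof (rule sum.neutral, intro ballI)
    fix i assume "i \<in> {..<n}"
    then have "f i \<le> (\<Sum>i<n. f i)"
      by (intro member_le_sum) simp_all
    then have "int (f i) \<le> int (\<Sum>i<n. f i)"
      by (simp only: of_nat_le_iff)
    then show "c i * zpow (f i) k = 0"
      using that by (auto simp: zpow_def simp del: of_nat_sum)
  qed
  then show ?thesis
    unfolding Hplus_def Hset_def by auto
qed

lemma lin_subspace_sum:
  fixes n :: nat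
  assumes W: "lin_subspace W"
  shows "(\<And>i. i < n \<Longrightarrow> v i \<in> W) \<Longrightarrow> (\<lambda>k. \<Sum>i<n. c i * v i k) \<in> W"
proof (induction n)
  case 0
  then show ?case using W by (simp add: lin_subspace_def)
next
  case (Suc n)
  then have "(\<lambda>k. \<Sum>i<n. c i * v i k) \<in> W" "(\<lambda>k. c n * v n k) \<in> W"
    using W by (auto simp: lin_subspace_def)
  then show ?case
    using W unfolding lin_subspace_def by simp
qed

lemma lin_subspace_diff:
  assumes "lin_subspace W" "f \<in> W" "g \<in> W"
  shows "(\<lambda>k. f k - g k) \<in> W"
  using lin_subspace_sum[OF assms(1), of 2 "\<lambda>i. if i = 0 then f else g" "\<lambda>i. if i = 0 then 1 else -1"]
    assms(2,3) by (simp add: numeral_2_eq_2)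

lemma lin_span_subset: "lin_subspace W \<Longrightarrow> S \<subseteq> W \<Longrightarrow> lin_span S \<subseteq> W"
  unfolding lin_span_def using lin_subspace_sum by blast

lemma lin_span_Gcal_zpow:
  assumes G: "G \<in> Gcal"
  shows "lin_span (range (\<lambda>n. D_act G (zpow n))) = D_act G ` Hplus"
proof
  show "lin_span (range (\<lambda>n. D_act G (zpow n))) \<subseteq> D_act G ` Hplus"
  proof
    fix x assume "x \<in> lin_span (range (\<lambda>n. D_act G (zpow n)))"
    then obtain n :: nat and c v where v: "\<forall>i<n. v i \<in> range (\<lambda>n. D_act G (zpow n))"
      and x: "x = (\<lambda>k. \<Sum>i<n. c i * v i k)"
      unfolding lin_span_def by (auto simp only: mem_Collect_eq)
    from v have "\<forall>i. \<exists>m. i < n \<longrightarrow> v i = D_act G (zpow m)"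
      by auto
    then obtain f where f: "\<And>i. i < n \<Longrightarrow> v i = D_act G (zpow (f i))"
      by metis
    have deg: "deg_le (int (\<Sum>i<n. f i)) (zpow (f i))" if "i < n" for i
    proof (rule deg_le_mono[OF deg_le_zpow])
      show "int (f i) \<le> int (\<Sum>i<n. f i)"
        using that by (simp only: of_nat_le_iff) (intro member_le_sum, simp_all)
    qed
    have "D_act G (\<lambda>k. \<Sum>i<n. c i * zpow (f i) k) = (\<lambda>l. \<Sum>i<n. c i * D_act G (zpow (f i)) l)"
      by (rule D_act_sum[OF op_deg_le_Gcal[OF G] deg])
    then have "x = D_act G (\<lambda>k. \<Sum>i<n. c i * zpow (f i) k)"
      unfolding x by (simp add: f)
    then show "x \<in> D_act G ` Hplus"
      using sum_zpow_Hplus by (rule image_eqI)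
  qed
next
  show "D_act G ` Hplus \<subseteq> lin_span (range (\<lambda>n. D_act G (zpow n)))"
  proof
    fix y assume "y \<in> D_act G ` Hplus"
    then obtain p where p: "p \<in> Hplus" and y: "y = D_act G p"
      by auto
    obtain N where pN: "p = (\<lambda>k. \<Sum>i<N. p (int i) * zpow i k)"
      using Hplus_eq_sum_zpow[OF p] by blast
    have "deg_le (int N) (zpow i)" if "i < N" for i
      using that by (intro deg_le_mono[OF deg_le_zpow]) simp
    then have "y = (\<lambda>l. \<Sum>i<N. p (int i) * D_act G (zpow i) l)"
      unfolding y by (subst pN) (rule D_act_sum[OF op_deg_le_Gcal[OF G]])
    then show "y \<in> lin_span (range (\<lambda>n. D_act G (zpow n)))"
      unfolding lin_span_def
      by (intro CollectI exI[of _ N] exI[of _ "\<lambda>i. p (int i)"] exI[of _ "\<lambda>i. D_act G (zpow i)"]) auto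
  qed
qed

lemma Gr0D:
  assumes "W \<in> Gr0"
  shows "W \<subseteq> Hset" "lin_subspace W" "inj_on proj_plus W" "proj_plus ` W = Hplus"
  using assms by (auto simp: Gr0_def bij_betw_def)

lemma Gr0_eq_if_subset:
  assumes V: "V \<in> Gr0" and W: "W \<in> Gr0" and sub: "V \<subseteq> W"
  shows "V = W"
proof
  show "W \<subseteq> V"
  proof
    fix w assume w: "w \<in> W"
    have "proj_plus w \<in> proj_plus ` V"
      unfolding Gr0D(4)[OF V] Gr0D(4)[OF W, symmetric] using w by (rule imageI)
    then obtain v where v: "v \<in> V" "proj_plus v = proj_plus w"
      by (auto simp only: image_iff)
    have "v = w"
      using Gr0D(3)[OF W] v w sub by (meson inj_onD subsetD)
    with v show "w \<in> V" by simp
  qed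
qed (rule sub)

text \<open>Approximations of \<open>f\<close> modulo \<open>z\<^sup>-\<^sup>1C[[z\<^sup>-\<^sup>1]]\<close> all have the same projection, hence
  coincide.\<close>
lemma closed_H_if_inj_on_proj_plus:
  assumes "inj_on proj_plus W"
  shows "closed_H W"
  unfolding closed_H_def
proof (intro ballI impI)
  fix f assume "\<forall>N::int. \<exists>w\<in>W. \<forall>k\<ge>-N. w k = f k"
  then obtain w where w: "\<And>N. w N \<in> W" "\<And>N k. k \<ge> -N \<Longrightarrow> w N k = f k"
    by metis
  have "proj_plus (w N) = proj_plus f" if "N \<ge> 0" for N
    using w(2)[of N] that by (auto simp: proj_plus_def fun_eq_iff)
  then have w0: "w N = w 0" if "N \<ge> 0" for N
    using inj_onD[OF assms _ w(1) w(1)] that by simp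
  have "f k = w 0 k" for k
    using w(2)[of "\<bar>k\<bar>" k] w0[of "\<bar>k\<bar>"] by simp
  then have "f = w 0" ..
  then show "f \<in> W"
    using w(1) by simp
qed

lemma lin_subspace_Gcal_image:
  assumes G: "G \<in> Gcal"
  shows "lin_subspace (D_act G ` Hplus)"
  unfolding lin_subspace_def
proof (intro conjI ballI allI)
  note opG = op_deg_le_Gcal[OF G]
  show "(\<lambda>_. 0) \<in> D_act G ` Hplus"
    using D_act_zero[symmetric] zero_Hplus by (rule image_eqI)
  fix f g assume "f \<in> D_act G ` Hplus" "g \<in> D_act G ` Hplus"
  then obtain p q where pq: "p \<in> Hplus" "q \<in> Hplus" and fg: "f = D_act G p" "g = D_act G q"
    by blast
  obtain T where "deg_le T p" "deg_le T q"
    using Hplus_common_deg_le[OF pq] by blast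
  then have "(\<lambda>k. f k + g k) = D_act G (\<lambda>k. p k + q k)"
    unfolding fg by (rule D_act_add[OF opG, symmetric])
  then show "(\<lambda>k. f k + g k) \<in> D_act G ` Hplus"
    using Hplus_add[OF pq] by (rule image_eqI)
next
  fix c f assume "f \<in> D_act G ` Hplus"
  then obtain p where p: "p \<in> Hplus" and f: "f = D_act G p"
    by blast
  obtain T where "deg_le T p"
    using Hplus_deg_le[OF p] by blast
  then have "(\<lambda>k. c * f k) = D_act G (\<lambda>k. c * p k)"
    unfolding f by (rule D_act_scale[OF op_deg_le_Gcal[OF G], symmetric])
  then show "(\<lambda>k. c * f k) \<in> D_act G ` Hplus"
    using Hplus_scale[OF p] by (rule image_eqI)
qed

lemma inj_on_proj_plus_Gcal_image:
  assumes G: "G \<in> Gcal"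
  shows "inj_on proj_plus (D_act G ` Hplus)"
proof (rule inj_onI, clarify)
  fix p q assume pq: "p \<in> Hplus" "q \<in> Hplus" and eq: "proj_plus (D_act G p) = proj_plus (D_act G q)"
  obtain T where T: "deg_le T p" "deg_le T q"
    using Hplus_common_deg_le[OF pq] by blast
  have "D_act G (\<lambda>k. p k - q k) l = 0" if "0 \<le> l" for l
    using fun_cong[OF eq, of l] that by (simp add: D_act_diff[OF op_deg_le_Gcal[OF G] T] proj_plus_def)
  then have "p k - q k = 0" if "0 \<le> k" for k
    using Gcal_act_vanishes_on_nonneg[OF G deg_le_diff[OF T]] that by blast
  moreover have "p k - q k = 0" if "k < 0" for k
    using Hplus_negative[OF pq(1) that] Hplus_negative[OF pq(2) that] by simp
  ultimately have "p = q"
    by (metis eq_iff_diff_eq_0 not_le ext)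
  then show "D_act G p = D_act G q" by simp
qed

text \<open>Solve \<open>G v = p\<close> and drop the negative part of \<open>v\<close>: \<open>G\<close> maps \<open>H\<^sub>-\<close> into \<open>H\<^sub>-\<close>.\<close>
lemma proj_plus_Gcal_image_surj:
  assumes G: "G \<in> Gcal" and p: "p \<in> Hplus"
  shows "p \<in> proj_plus ` D_act G ` Hplus"
proof -
  note opG = op_deg_le_Gcal[OF G]
  obtain T where T: "deg_le T p" "0 \<le> T"
    using Hplus_deg_le[OF p] deg_le_mono by (metis max.cobounded1 max.cobounded2)
  then obtain v where v: "deg_le T v" "D_act G v = p"
    using Gcal_act_surj[OF G] by blast
  define q where "q = proj_plus v"
  have q: "deg_le T q"
    using v(1) by (simp add: q_def deg_le_def proj_plus_def)
  have "deg_le (-1 + 0) (D_act G (\<lambda>k. v k - q k))"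
    by (rule deg_le_D_act[OF opG]) (simp add: deg_le_def q_def proj_plus_def)
  then have "proj_plus (D_act G q) = proj_plus p"
    by (auto simp: proj_plus_def fun_eq_iff deg_le_def D_act_diff[OF opG v(1) q] v(2))
  also have "proj_plus p = p"
    using Hplus_negative[OF p] by (auto simp: proj_plus_def)
  finally have "p = proj_plus (D_act G q)" ..
  moreover have "q \<in> Hplus"
    unfolding q_def using v(1) by (intro proj_plus_Hplus) (auto simp: Hset_iff_deg_le)
  ultimately show ?thesis
    by blast
qed

lemma Gcal_image_Gr0:
  assumes G: "G \<in> Gcal"
  shows "D_act G ` Hplus \<in> Gr0"
proof -
  have sub: "D_act G ` Hplus \<subseteq> Hset"
  proof
    fix x assume "x \<in> D_act G ` Hplus"
    then obtain p T where "x = D_act G p" "deg_le T p"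
      using Hplus_deg_le by blast
    then show "x \<in> Hset"
      using deg_le_D_act[OF op_deg_le_Gcal[OF G]] Hset_iff_deg_le by blast
  qed
  then have "proj_plus ` D_act G ` Hplus = Hplus"
    using proj_plus_Hplus proj_plus_Gcal_image_surj[OF G] by blast
  then show ?thesis
    using sub lin_subspace_Gcal_image[OF G] inj_on_proj_plus_Gcal_image[OF G]
      closed_H_if_inj_on_proj_plus[OF inj_on_proj_plus_Gcal_image[OF G]]
    unfolding Gr0_def bij_betw_def by blast
qed

section \<open>Sato's theorem\<close>

text \<open>If \<open>G\<^sub>1 H\<^sub>+ = G\<^sub>2 H\<^sub>+\<close>, the first column where \<open>G\<^sub>1\<close> and \<open>G\<^sub>2\<close> differ would produce an
  element \<open>(G\<^sub>1 - G\<^sub>2) z\<^sup>n\<close> of the subspace lying in \<open>H\<^sub>-\<close>.\<close>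
lemma Gcal_eq_if_image_eq:
  assumes G1: "G1 \<in> Gcal" and G2: "G2 \<in> Gcal" and eq: "D_act G1 ` Hplus = D_act G2 ` Hplus"
  shows "G1 = G2"
proof
  fix n
  show "G1 n = G2 n"
  proof (induction n rule: less_induct)
    case (less n)
    define W where "W = D_act G2 ` Hplus"
    note W = Gr0D[OF Gcal_image_Gr0[OF G2, folded W_def]]
    define d where "d = (\<lambda>k. D_act G1 (zpow n) k - D_act G2 (zpow n) k)"
    have "d \<in> W"
      unfolding d_def using zpow_Hplus eq
      by (intro lin_subspace_diff[OF W(2)]) (auto simp: W_def)
    have d: "d l = (G1 n l - G2 n l) * ffact (int n) n" for l
    proof -
      have "(\<Sum>m<n. G1 m (l - int n + int m) * ffact (int n) m) =
          (\<Sum>m<n. G2 m (l - int n + int m) * ffact (int n) m)"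
        using less by (intro sum.cong) auto
      then show ?thesis
        by (simp add: d_def D_act_zpow_top algebra_simps)
    qed
    have "proj_plus d = proj_plus (\<lambda>_. 0)"
      by (auto simp: proj_plus_def fun_eq_iff d Gcal_coeff[OF G1] Gcal_coeff[OF G2])
    moreover have "(\<lambda>_. 0) \<in> W"
      using W(2) by (simp add: lin_subspace_def)
    ultimately have "d = (\<lambda>_. 0)"
      using W(3) \<open>d \<in> W\<close> by (meson inj_onD)
    then show "G1 n = G2 n"
      using d ffact_nonzero[of n n] by (auto simp: fun_eq_iff)
  qed
qed

lemma Gr0_column_step:
  assumes W: "W \<in> Gr0" and r: "r \<in> Hset"
  shows "\<exists>c. c \<in> Hset \<and> (\<forall>l\<ge>0. c l = D_one n l) \<and> (\<lambda>l. r l + c l * ffact (int n) n) \<in> W"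
proof -
  define t where "t = (\<lambda>k. proj_plus r k + (if n = 0 then zpow 0 k else 0))"
  have "(\<lambda>k. if n = 0 then zpow 0 k else 0) \<in> Hplus"
    by (cases "n = 0") (simp_all add: zpow_Hplus zero_Hplus)
  then have "t \<in> Hplus"
    unfolding t_def by (rule Hplus_add[OF proj_plus_Hplus[OF r]])
  then obtain w where w: "w \<in> W" "proj_plus w = t"
    unfolding Gr0D(4)[OF W, symmetric] by blast
  define c where "c = (\<lambda>l. (w l - r l) / ffact (int n) n)"
  have "w \<in> Hset"
    using w(1) Gr0D(1)[OF W] by blast
  then obtain Tw Tr where "deg_le Tw w" "deg_le Tr r"
    using r unfolding Hset_iff_deg_le by blast
  then have "deg_le (max Tw Tr) c"
    unfolding c_def deg_le_def by simp
  then have "c \<in> Hset"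
    unfolding Hset_iff_deg_le by blast
  moreover have "c l = D_one n l" if "0 \<le> l" for l
  proof -
    have "w l = t l"
      using fun_cong[OF w(2), of l] that by (simp add: proj_plus_def)
    then show ?thesis
      using that by (auto simp: c_def t_def proj_plus_def zpow_def D_one_def)
  qed
  moreover have "(\<lambda>l. r l + c l * ffact (int n) n) = w"
    using ffact_nonzero[of n n] by (simp add: c_def)
  ultimately show ?thesis
    using w(1) by auto
qed

text \<open>The Sato group element is built column by column: the \<open>n\<close>-th column is corrected by
  \<open>Gr0_column_step\<close> so that \<open>G z\<^sup>n\<close> lands in \<open>W\<close>.\<close>
lemma sato_exists:
  assumes W: "W \<in> Gr0"
  shows "\<exists>G. G \<in> Gcal \<and> W = D_act G ` Hplus"
proof -
  define r where "r g n = (\<lambda>l. \<Sum>m<n. g m (l - int n + int m) * ffact (int n) m)" for g :: diffop and n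
  define good where "good g n c \<longleftrightarrow>
      c \<in> Hset \<and> (\<forall>l\<ge>0. c l = D_one n l) \<and> (\<lambda>l. r g n l + c l * ffact (int n) n) \<in> W" for g n c
  obtain a where a: "\<And>n. a n = (SOME c. good (\<lambda>m. if m < n then a m else undefined) n c)"
    using nat_strong_rec_exists[of "\<lambda>n g. SOME c. good g n c"] by blast
  have r_a: "r (\<lambda>m. if m < n then a m else undefined) n = r a n" for n
    unfolding r_def by (auto intro!: sum.cong)
  have good_a: "good a n (a n)" for n
  proof (induction n rule: less_induct)
    case (less n)
    have "a m \<in> Hset" if "m < n" for m
      using less[OF that] unfolding good_def by blast
    then obtain T where "\<forall>m<n. deg_le T (a m)"
      using deg_le_common[of n a] by blast
    then have "deg_le (T + int n) (r a n)"
      unfolding r_def deg_le_def by (auto intro!: sum.neutral)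
    then have "r a n \<in> Hset"
      unfolding Hset_iff_deg_le by blast
    then have "\<exists>c. good a n c"
      unfolding good_def by (rule Gr0_column_step[OF W])
    then have "good a n (SOME c. good a n c)"
      by (rule someI_ex)
    then show ?case
      using a[of n] by (simp add: good_def r_a)
  qed
  then have aG: "a \<in> Gcal"
    unfolding Gcal_iff_coeffs good_def by simp
  have column: "D_act a (zpow n) = (\<lambda>l. r a n l + a n l * ffact (int n) n)" for n
    by (rule ext) (simp add: r_def D_act_zpow_top)
  have "D_act a (zpow n) \<in> W" for n
    unfolding column using good_a[of n] unfolding good_def by blast
  then have "lin_span (range (\<lambda>n. D_act a (zpow n))) \<subseteq> W"
    by (intro lin_span_subset[OF Gr0D(2)[OF W]]) auto
  then have "D_act a ` Hplus \<subseteq> W"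
    unfolding lin_span_Gcal_zpow[OF aG] .
  then have "D_act a ` Hplus = W"
    by (rule Gr0_eq_if_subset[OF Gcal_image_Gr0[OF aG] W])
  with aG show ?thesis by blast
qed

lemma sato:
  assumes W: "W \<in> Gr0"
  shows "sato W \<in> Gcal" "W = D_act (sato W) ` Hplus"
proof -
  obtain G where "G \<in> Gcal" "W = D_act G ` Hplus"
    using sato_exists[OF W] by blast
  then have "\<exists>!G. G \<in> Gcal \<and> W = D_act G ` Hplus"
    using Gcal_eq_if_image_eq by (intro ex1I[of _ G]) auto
  then have "sato W \<in> Gcal \<and> W = D_act (sato W) ` Hplus"
    unfolding sato_def by (rule theI')
  then show "sato W \<in> Gcal" "W = D_act (sato W) ` Hplus"
    by auto
qed

lemma sato_Gcal_image:
  assumes G: "G \<in> Gcal"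
  shows "sato (D_act G ` Hplus) = G"
  using sato[OF Gcal_image_Gr0[OF G]] by (intro Gcal_eq_if_image_eq[OF _ G]) auto

section \<open>The Kac--Schwarz pair of a group element\<close>

definition dress :: "diffop \<Rightarrow> diffop \<Rightarrow> diffop" where
  "dress G A = D_mult G (D_mult A (G_inv G))"

lemma KS_P_eq_dress: "KS_P W = dress (sato W) D_del"
  by (simp add: KS_P_def dress_def)

lemma KS_Q_eq_dress: "KS_Q W = dress (sato W) D_z"
  by (simp add: KS_Q_def dress_def)

context
  fixes G :: diffop
  assumes G: "G \<in> Gcal"
begin

lemma op_deg_le_G_inv: "op_deg_le 0 (G_inv G)"
  by (rule op_deg_le_Gcal[OF G_inv(1)[OF G]])

lemma op_deg_le_dress: "op_deg_le K A \<Longrightarrow> op_deg_le K (dress G A)"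
  using op_deg_le_D_mult[OF op_deg_le_Gcal[OF G] op_deg_le_D_mult[OF _ op_deg_le_G_inv]]
  by (simp add: dress_def)

lemma D_act_dress_Gcal:
  assumes A: "op_deg_le K A" and y: "deg_le T y"
  shows "D_act (dress G A) (D_act G y) = D_act G (D_act A y)"
proof -
  have Gy: "deg_le (T + 0) (D_act G y)"
    by (rule deg_le_D_act[OF op_deg_le_Gcal[OF G] y])
  show ?thesis
    unfolding dress_def D_act_D_mult[OF op_deg_le_Gcal[OF G] op_deg_le_D_mult[OF A op_deg_le_G_inv] Gy]
      D_act_D_mult[OF A op_deg_le_G_inv Gy] G_inv_left_act[OF G y] ..
qed

lemma dress_eq_if_intertwines:
  assumes A: "op_deg_le K A" and B: "op_deg_le K' B" and BG: "D_mult B G = D_mult G A"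
  shows "dress G A = B"
proof -
  have "dress G A = D_mult (D_mult G A) (G_inv G)"
    unfolding dress_def by (rule D_mult_assoc[OF op_deg_le_Gcal[OF G] A op_deg_le_G_inv, symmetric])
  also have "\<dots> = D_mult B (D_mult G (G_inv G))"
    unfolding BG[symmetric] by (rule D_mult_assoc[OF B op_deg_le_Gcal[OF G] op_deg_le_G_inv])
  also have "\<dots> = B"
    by (simp add: G_inv(2)[OF G] D_mult_D_one_right[OF B])
  finally show ?thesis .
qed

lemma D_comm_dress_del_z: "D_comm (dress G D_del) (dress G D_z) = D_one"
proof (rule diffop_eq_if_act_zpow_eq)
  fix n
  define y where "y = D_act (G_inv G) (zpow n)"
  have y: "deg_le (int n) y"
    unfolding y_def using deg_le_D_act[OF op_deg_le_G_inv deg_le_zpow] by simp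
  have zn: "zpow n = D_act G y"
    unfolding y_def by (rule G_inv_right_act[OF G deg_le_zpow, symmetric])
  have zy: "deg_le (int n + 1) (D_act D_z y)" and dy: "deg_le (int n + 0) (D_act D_del y)"
    by (rule deg_le_D_act[OF op_deg_le_D_z y], rule deg_le_D_act[OF op_deg_le_D_del y])
  have "deg_le (int n + 1) (D_act D_del (D_act D_z y))" "deg_le (int n + 1) (D_act D_z (D_act D_del y))"
    using deg_le_D_act[OF op_deg_le_D_del zy] deg_le_D_act[OF op_deg_le_D_z dy] by simp_all
  note Gdiff = D_act_diff[OF op_deg_le_Gcal[OF G] this]
  have PQ: "op_deg_le 1 (D_mult (dress G D_del) (dress G D_z))"
    and QP: "op_deg_le 1 (D_mult (dress G D_z) (dress G D_del))"
    using op_deg_le_D_mult[OF op_deg_le_dress[OF op_deg_le_D_del] op_deg_le_dress[OF op_deg_le_D_z]]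
      op_deg_le_D_mult[OF op_deg_le_dress[OF op_deg_le_D_z] op_deg_le_dress[OF op_deg_le_D_del]]
    by simp_all
  have "D_act (D_comm (dress G D_del) (dress G D_z)) (zpow n) =
      (\<lambda>l. D_act (dress G D_del) (D_act (dress G D_z) (zpow n)) l
         - D_act (dress G D_z) (D_act (dress G D_del) (zpow n)) l)"
    unfolding D_comm_def D_act_D_sub[OF PQ QP deg_le_zpow]
      D_act_D_mult[OF op_deg_le_dress[OF op_deg_le_D_del] op_deg_le_dress[OF op_deg_le_D_z] deg_le_zpow]
      D_act_D_mult[OF op_deg_le_dress[OF op_deg_le_D_z] op_deg_le_dress[OF op_deg_le_D_del] deg_le_zpow] ..
  also have "\<dots> = (\<lambda>l. D_act G (D_act D_del (D_act D_z y)) l - D_act G (D_act D_z (D_act D_del y)) l)"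
    unfolding zn D_act_dress_Gcal[OF op_deg_le_D_z y] D_act_dress_Gcal[OF op_deg_le_D_del y]
      D_act_dress_Gcal[OF op_deg_le_D_del zy] D_act_dress_Gcal[OF op_deg_le_D_z dy] ..
  also have "\<dots> = D_act G y"
    unfolding Gdiff[symmetric] by (simp add: D_act_D_del_D_z_commutator)
  finally show "D_act (D_comm (dress G D_del) (dress G D_z)) (zpow n) = D_act D_one (zpow n)"
    by (simp add: zn D_act_D_one)
qed

lemma dress_minus_eq:
  assumes A: "op_deg_le K A"
  shows "D_sub (dress G A) A = D_mult (D_sub (D_mult G A) (D_mult A G)) (G_inv G)"
proof (rule diffop_eq_if_act_zpow_eq)
  fix n
  define y where "y = D_act (G_inv G) (zpow n)"
  have y: "deg_le (int n) y"
    unfolding y_def using deg_le_D_act[OF op_deg_le_G_inv deg_le_zpow] by simp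
  have zn: "zpow n = D_act G y"
    unfolding y_def by (rule G_inv_right_act[OF G deg_le_zpow, symmetric])
  have GA: "op_deg_le (max K 0) (D_mult G A)" and AG: "op_deg_le (max K 0) (D_mult A G)"
    using op_deg_le_D_mult[OF op_deg_le_Gcal[OF G] A] op_deg_le_D_mult[OF A op_deg_le_Gcal[OF G]]
    by (auto intro: op_deg_le_mono)
  have C: "op_deg_le (max K 0) (D_sub (D_mult G A) (D_mult A G))"
    using GA AG unfolding op_deg_le_def D_sub_def by auto
  have A': "op_deg_le (max K 0) A" and dA: "op_deg_le (max K 0) (dress G A)"
    using op_deg_le_mono[OF A] op_deg_le_dress[OF A] op_deg_le_mono by auto
  have "D_act (D_sub (dress G A) A) (zpow n) = (\<lambda>l. D_act (dress G A) (zpow n) l - D_act A (zpow n) l)"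
    by (rule D_act_D_sub[OF dA A' deg_le_zpow])
  also have "\<dots> = (\<lambda>l. D_act G (D_act A y) l - D_act A (D_act G y) l)"
    unfolding zn D_act_dress_Gcal[OF A y] ..
  also have "\<dots> = D_act (D_sub (D_mult G A) (D_mult A G)) y"
    unfolding D_act_D_sub[OF GA AG y] D_act_D_mult[OF op_deg_le_Gcal[OF G] A y]
      D_act_D_mult[OF A op_deg_le_Gcal[OF G] y] ..
  also have "\<dots> = D_act (D_mult (D_sub (D_mult G A) (D_mult A G)) (G_inv G)) (zpow n)"
    unfolding D_act_D_mult[OF C op_deg_le_G_inv deg_le_zpow] y_def ..
  finally show "D_act (D_sub (dress G A) A) (zpow n) =
      D_act (D_mult (D_sub (D_mult G A) (D_mult A G)) (G_inv G)) (zpow n)" .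
qed

lemma dress_del_condition: "D_sub (dress G D_del) D_del \<in> zinv_Dminus"
proof -
  have C: "D_sub (D_mult G D_del) (D_mult D_del G) p l = - (of_int (l + 1) * G p (l + 1))" for p l
    by (simp add: D_sub_def D_mult_D_del_left D_mult_D_del_right)
  have "op_deg_le (-2) (D_sub (D_mult G D_del) (D_mult D_del G))"
    unfolding op_deg_le_def
  proof (intro allI impI)
    fix p and l :: int assume "-2 < l"
    then consider "l + 1 = 0" | "0 \<le> l + 1" "l + 1 \<noteq> 0"
      by linarith
    then show "D_sub (D_mult G D_del) (D_mult D_del G) p l = 0"
    proof cases
      case 1
      then show ?thesis by (simp only: C of_int_0 mult_zero_left minus_zero)
    next
      case 2
      then show ?thesis by (simp add: C Gcal_coeff[OF G] D_one_def)
    qed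
  qed
  from op_deg_le_D_mult[OF this op_deg_le_G_inv] show ?thesis
    unfolding dress_minus_eq[OF op_deg_le_D_del] by (simp add: zinv_Dminus_def op_deg_le_def)
qed

lemma dress_z_condition: "D_sub (dress G D_z) D_z \<in> Dminus"
proof -
  have "D_sub (D_mult G D_z) (D_mult D_z G) p l = of_nat (p + 1) * G (p + 1) l" for p l
    by (simp add: D_sub_def D_mult_D_z_left D_mult_D_z_right)
  then have "op_deg_le (-1) (D_sub (D_mult G D_z) (D_mult D_z G))"
    unfolding op_deg_le_def by (auto simp: Gcal_coeff[OF G] D_one_def)
  from op_deg_le_D_mult[OF this op_deg_le_G_inv] show ?thesis
    unfolding dress_minus_eq[OF op_deg_le_D_z] by (simp add: Dminus_def op_deg_le_def)
qed

lemma dress_GrD: "(dress G D_del, dress G D_z) \<in> GrD"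
  unfolding GrD_def
  using Dset_if_op_deg_le[OF op_deg_le_dress[OF op_deg_le_D_del]]
    Dset_if_op_deg_le[OF op_deg_le_dress[OF op_deg_le_D_z]]
    D_comm_dress_del_z dress_del_condition dress_z_condition
  by auto

lemma Gcal_zpow_0_one_plus_Hminus: "D_act G (zpow 0) \<in> one_plus_Hminus"
  unfolding one_plus_Hminus_def by (auto simp: D_act_zpow Gcal_coeff[OF G] D_one_def)

lemma dress_del_kernel: "D_act (dress G D_del) (D_act G (zpow 0)) = (\<lambda>_. 0)"
  by (simp add: D_act_dress_Gcal[OF op_deg_le_D_del deg_le_zpow] D_act_D_del_zpow_0 D_act_zero)

lemma D_act_D_pow_dress_z: "D_act (D_pow (dress G D_z) n) (D_act G (zpow 0)) = D_act G (zpow n)"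
proof (induction n)
  case 0
  then show ?case by (simp add: D_act_D_one)
next
  case (Suc n)
  have "deg_le (int 0 + 0) (D_act G (zpow 0))"
    by (rule deg_le_D_act[OF op_deg_le_Gcal[OF G] deg_le_zpow])
  from D_act_D_mult[OF op_deg_le_dress[OF op_deg_le_D_z] op_deg_le_D_pow[OF op_deg_le_dress[OF op_deg_le_D_z]] this]
  show ?case
    by (simp add: Suc D_act_dress_Gcal[OF op_deg_le_D_z deg_le_zpow] D_act_D_z_zpow)
qed

end

section \<open>Kac--Schwarz pairs determine the point of the Grassmannian\<close>

lemma deg_le_one_plus_Hminus: "\<Psi> \<in> one_plus_Hminus \<Longrightarrow> deg_le 0 \<Psi>"
  unfolding one_plus_Hminus_def deg_le_def by auto

context
  fixes P Q :: diffop
  assumes PQ: "(P, Q) \<in> GrD"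
begin

lemma GrD_P_coeff: "-1 \<le> k \<Longrightarrow> P m k = D_del m k"
  using PQ unfolding GrD_def zinv_Dminus_def D_sub_def by auto

lemma GrD_Q_coeff: "0 \<le> k \<Longrightarrow> Q m k = D_z m k"
  using PQ unfolding GrD_def Dminus_def D_sub_def by auto

lemma op_deg_le_GrD_P: "op_deg_le 0 P"
  unfolding op_deg_le_def by (auto simp: GrD_P_coeff D_del_def)

lemma op_deg_le_GrD_Q: "op_deg_le 1 Q"
  unfolding op_deg_le_def by (auto simp: GrD_Q_coeff D_z_def)

definition P_lower :: "laurent \<Rightarrow> int \<Rightarrow> complex" where
  "P_lower g l = Sum_any (\<lambda>(m, k). if k \<le> -2 then P m k * deriv_coef m g (l - 1 - k) else 0)"

text \<open>Since \<open>P = \<partial> + z\<^sup>-\<^sup>2(\<dots>)\<close>, the coefficient of \<open>z\<^sup>l\<^sup>-\<^sup>1\<close> in \<open>P g\<close> is \<open>l g\<^sub>l\<close> plus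
  terms involving only \<open>g\<^sub>i\<close> with \<open>i > l\<close>.\<close>
lemma D_act_GrD_P:
  assumes "deg_le T g"
  shows "D_act P g (l - 1) = of_int l * g l + P_lower g l"
proof -
  have "D_act P g (l - 1) = (case (1::nat, 0::int) of (m, k) \<Rightarrow> P m k * deriv_coef m g (l - 1 - k))
     + Sum_any (\<lambda>x. if x = (1, 0) then 0 else (case x of (m, k) \<Rightarrow> P m k * deriv_coef m g (l - 1 - k)))"
    unfolding D_act_def by (rule Sum_any_split_point[OF finite_D_act_terms[OF op_deg_le_GrD_P assms]])
  moreover have "P 1 0 = 1"
    using GrD_P_coeff[of 0 1] by (simp add: D_del_def)
  moreover have "Sum_any (\<lambda>x. if x = (1, 0) then 0 else (case x of (m, k) \<Rightarrow> P m k * deriv_coef m g (l - 1 - k)))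
      = P_lower g l"
    unfolding P_lower_def
  proof (rule Sum_any.cong, clarify)
    fix m k
    show "(if (m, k) = (1, 0) then 0 else P m k * deriv_coef m g (l - 1 - k)) =
        (if k \<le> -2 then P m k * deriv_coef m g (l - 1 - k) else 0)"
      using GrD_P_coeff[of k m] by (auto simp: D_del_def)
  qed
  ultimately show ?thesis
    by (simp add: deriv_coef_def)
qed

lemma P_lower_local: "P_lower g l = P_lower (\<lambda>i. if l < i then g i else 0) l"
  unfolding P_lower_def by (rule Sum_any.cong) (auto simp: deriv_coef_ffact split: prod.splits)

lemma P_lower_vanishes: "(\<And>i. l < i \<Longrightarrow> g i = 0) \<Longrightarrow> P_lower g l = 0"
proof -
  assume "\<And>i. l < i \<Longrightarrow> g i = 0"
  then have "(\<lambda>i. if l < i then g i else 0) = (\<lambda>_. 0)"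
    by auto
  then have "P_lower g l = P_lower (\<lambda>_. 0) l"
    using P_lower_local[of g l] by simp
  moreover have "(\<lambda>(m, k). if k \<le> -2 then P m k * deriv_coef m (\<lambda>_. 0) (l - 1 - k) else 0) = (\<lambda>_. 0::complex)"
    by (auto simp: fun_eq_iff deriv_coef_def)
  ultimately show ?thesis
    unfolding P_lower_def by simp
qed

text \<open>The coefficients of the wave function are found by descending recursion from
  \<open>\<Psi>\<^sub>0 = 1\<close>, solving \<open>l \<Psi>\<^sub>l = - P_lower \<Psi> l\<close> for \<open>l < 0\<close>.\<close>
lemma wave_function_exists: "\<exists>\<Psi>. \<Psi> \<in> one_plus_Hminus \<and> D_act P \<Psi> = (\<lambda>_. 0)"
proof -
  obtain v :: laurent where v_top: "\<forall>l. 0 < l \<longrightarrow> v l = 0"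
    and v_rec: "\<forall>l\<le>0. v l = (if l = 0 then 1 else - P_lower (\<lambda>i. if l < i then v i else 0) l / of_int l)"
    using int_descending_rec_exists[of 0 "\<lambda>l g. if l = 0 then 1 else - P_lower g l / of_int l"] by blast
  have v: "deg_le 0 v"
    using v_top by (simp add: deg_le_def)
  have Pv: "D_act P v (l - 1) = 0" for l
  proof (cases "l < 0")
    case True
    then have "v l = - P_lower v l / of_int l"
      using v_rec[rule_format, of l] P_lower_local[of v l] by simp
    then show ?thesis
      using True by (simp add: D_act_GrD_P[OF v] field_simps)
  next
    case False
    then have "of_int l * v l = 0"
      using v_top by (cases "l = 0") auto
    moreover have "P_lower v l = 0"
      using False v_top by (intro P_lower_vanishes) auto
    ultimately show ?thesis
      by (simp add: D_act_GrD_P[OF v])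
  qed
  have "D_act P v = (\<lambda>_. 0)"
  proof
    fix j
    show "D_act P v j = 0"
      using Pv[of "j + 1"] by simp
  qed
  moreover have "v \<in> one_plus_Hminus"
    unfolding one_plus_Hminus_def using v_top v_rec[rule_format, of 0] by simp
  ultimately show ?thesis by auto
qed

lemma wave_function_unique:
  assumes "\<Psi>1 \<in> one_plus_Hminus" "D_act P \<Psi>1 = (\<lambda>_. 0)"
    and "\<Psi>2 \<in> one_plus_Hminus" "D_act P \<Psi>2 = (\<lambda>_. 0)"
  shows "\<Psi>1 = \<Psi>2"
proof -
  define d where "d = (\<lambda>k. \<Psi>1 k - \<Psi>2 k)"
  have \<Psi>: "deg_le 0 \<Psi>1" "deg_le 0 \<Psi>2"
    using assms deg_le_one_plus_Hminus by auto
  have d: "deg_le 0 d"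
    unfolding d_def by (rule deg_le_diff[OF \<Psi>])
  have Pd: "D_act P d = (\<lambda>_. 0)"
    unfolding d_def D_act_diff[OF op_deg_le_GrD_P \<Psi>] using assms by simp
  have "d 0 = 0"
    using assms by (simp add: d_def one_plus_Hminus_def)
  have "d l = 0" for l
  proof (rule vanishes_by_descending_induction[OF d, of l l])
    fix l' assume above: "\<And>i. l' < i \<Longrightarrow> d i = 0"
    show "d l' = 0"
    proof (cases "l' < 0")
      case True
      have "of_int l' * d l' = 0"
        using D_act_GrD_P[OF d, of l'] Pd P_lower_vanishes[OF above] by simp
      then show ?thesis
        using True by simp
    next
      case False
      then show ?thesis
        using d \<open>d 0 = 0\<close> by (cases "l' = 0") (auto simp: deg_le_def)
    qed
  qed simp
  then show ?thesis
    by (auto simp: d_def fun_eq_iff)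
qed

lemma D_act_GrD_commutator:
  assumes x: "deg_le T x"
  shows "D_act P (D_act Q x) = (\<lambda>l. D_act Q (D_act P x) l + x l)"
proof -
  have PQ1: "op_deg_le 1 (D_mult P Q)" and QP1: "op_deg_le 1 (D_mult Q P)"
    using op_deg_le_D_mult[OF op_deg_le_GrD_P op_deg_le_GrD_Q]
      op_deg_le_D_mult[OF op_deg_le_GrD_Q op_deg_le_GrD_P] by simp_all
  have "x = D_act (D_comm P Q) x"
    using PQ by (simp add: GrD_def D_act_D_one)
  also have "\<dots> = (\<lambda>l. D_act P (D_act Q x) l - D_act Q (D_act P x) l)"
    unfolding D_comm_def D_act_D_sub[OF PQ1 QP1 x]
      D_act_D_mult[OF op_deg_le_GrD_P op_deg_le_GrD_Q x] D_act_D_mult[OF op_deg_le_GrD_Q op_deg_le_GrD_P x] ..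
  finally show ?thesis
    by (auto simp: fun_eq_iff algebra_simps)
qed

lemma D_mult_GrD_Q_column:
  assumes B: "\<And>i l'. i \<le> p \<Longrightarrow> 1 \<le> l' \<Longrightarrow> B i l' = 0" and l: "0 \<le> l"
  shows "D_mult Q B p l = B p (l - 1)"
proof -
  have column: "leibniz_term Q B p l m j k = (if (m, j, k) = (0, 0, 1) then B p (l - 1) else 0)" for m j k
  proof (cases "(m, j, k) = (0, 0, 1)")
    case True
    then show ?thesis
      using GrD_Q_coeff[of 1 0] by (simp add: leibniz_term_def D_z_def deriv_coef_def)
  next
    case False
    show ?thesis
    proof (cases "j \<le> m \<and> m \<le> p + j \<and> Q m k \<noteq> 0")
      case True
      with False have "k < 0"
        using GrD_Q_coeff[of k m] by (cases "0 \<le> k") (auto simp: D_z_def split: if_splits)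
      then have "B (p + j - m) (l - k + int j) = 0"
        using True l by (intro B) auto
      then show ?thesis
        using False by (auto simp: leibniz_term_def deriv_coef_ffact)
    qed (use False in \<open>auto simp: leibniz_term_def\<close>)
  qed
  have "(\<lambda>(m, j, k). if (m, j, k) = (0::nat, 0::nat, 1::int) then B p (l - 1) else 0)
      = (\<lambda>x. if x = (0, 0, 1) then B p (l - 1) else 0)"
    by (auto simp: fun_eq_iff)
  then show ?thesis
    unfolding D_mult_eq_Sum_any column by simp
qed

definition Q_orbit :: "laurent \<Rightarrow> nat \<Rightarrow> laurent" where
  "Q_orbit \<Psi> n = D_act (D_pow Q n) \<Psi>"

lemma deg_le_Q_orbit: "deg_le 0 \<Psi> \<Longrightarrow> deg_le (int n) (Q_orbit \<Psi> n)"
  unfolding Q_orbit_def using deg_le_D_act[OF op_deg_le_D_pow[OF op_deg_le_GrD_Q]] by fastforce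

lemma Q_orbit_Suc: "deg_le 0 \<Psi> \<Longrightarrow> Q_orbit \<Psi> (Suc n) = D_act Q (Q_orbit \<Psi> n)"
  unfolding Q_orbit_def by (simp add: D_act_D_mult[OF op_deg_le_GrD_Q op_deg_le_D_pow[OF op_deg_le_GrD_Q]])

lemma D_act_GrD_P_Q_orbit:
  assumes "\<Psi> \<in> one_plus_Hminus" "D_act P \<Psi> = (\<lambda>_. 0)"
  shows "D_act P (Q_orbit \<Psi> 0) = (\<lambda>_. 0)"
    and "D_act P (Q_orbit \<Psi> (Suc n)) = (\<lambda>l. of_nat (Suc n) * Q_orbit \<Psi> n l)"
proof -
  have \<Psi>: "deg_le 0 \<Psi>"
    by (rule deg_le_one_plus_Hminus[OF assms(1)])
  show zero: "D_act P (Q_orbit \<Psi> 0) = (\<lambda>_. 0)"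
    using assms by (simp add: Q_orbit_def D_act_D_one)
  show "D_act P (Q_orbit \<Psi> (Suc n)) = (\<lambda>l. of_nat (Suc n) * Q_orbit \<Psi> n l)"
  proof (induction n)
    case 0
    show ?case
      unfolding Q_orbit_Suc[OF \<Psi>] D_act_GrD_commutator[OF deg_le_Q_orbit[OF \<Psi>]] zero
      by (simp add: D_act_zero)
  next
    case (Suc n)
    show ?case
      unfolding Q_orbit_Suc[OF \<Psi>, of "Suc n"] D_act_GrD_commutator[OF deg_le_Q_orbit[OF \<Psi>]] Suc
        D_act_scale[OF op_deg_le_GrD_Q deg_le_Q_orbit[OF \<Psi>]] Q_orbit_Suc[OF \<Psi>, of n, symmetric]
      by (simp add: algebra_simps)
  qed
qed

text \<open>An operator \<open>a\<close> with \<open>a z\<^sup>n = Q\<^sup>n \<Psi>\<close> has no nonnegative powers of \<open>z\<close> in its higher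
  columns: comparing \<open>\<partial>\<^sup>N\<^sup>-\<^sup>1\<close>-coefficients in \<open>Q a = a z\<close> gives \<open>N a\<^sub>N = 0\<close> in nonnegative
  degrees.\<close>
lemma GrD_dressing_column:
  assumes a: "\<And>n. deg_le (int n) (a n)" and aQ: "\<And>n. D_act a (zpow (Suc n)) = D_act Q (D_act a (zpow n))"
  shows "1 \<le> N \<Longrightarrow> 0 \<le> l \<Longrightarrow> a N l = 0"
proof (induction N arbitrary: l rule: less_induct)
  case (less N)
  define M where "M = N - 1"
  have NM: "N = Suc M"
    using less.prems unfolding M_def by simp
  have lower: "trunc N a i l' = 0" if "i \<le> M" "1 \<le> l'" for i l'
    using a[of 0] less.IH[of i l'] that NM by (cases "i = 0") (auto simp: trunc_def deg_le_def)
  have aN: "op_deg_le (int N) (trunc N a)"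
    by (rule op_deg_le_trunc[OF a])
  have QaN: "op_deg_le (int N + 1) (D_mult Q (trunc N a))"
    and aNz: "op_deg_le (int N + 1) (D_mult (trunc N a) D_z)"
    using op_deg_le_D_mult[OF op_deg_le_GrD_Q aN] op_deg_le_D_mult[OF aN op_deg_le_D_z]
    by (simp_all add: add.commute)
  have "D_sub (D_mult Q (trunc N a)) (D_mult (trunc N a) D_z) m = (\<lambda>_ _. 0) m" if "m \<le> M" for m
  proof (rule diffop_coeff_eq_if_act_zpow_eq[OF _ that])
    fix n assume "n \<le> M"
    then have n: "n \<le> N" "Suc n \<le> N"
      using NM by auto
    show "D_act (D_sub (D_mult Q (trunc N a)) (D_mult (trunc N a) D_z)) (zpow n) =
        D_act (\<lambda>_ _. 0) (zpow n)"
      unfolding D_act_D_sub[OF QaN aNz deg_le_zpow] D_act_D_mult[OF op_deg_le_GrD_Q aN deg_le_zpow]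
        D_act_D_mult[OF aN op_deg_le_D_z deg_le_zpow] D_act_D_z_zpow D_act_trunc_zpow[OF n(1)]
        D_act_trunc_zpow[OF n(2)] aQ D_act_zero_op
      by simp
  qed
  then have "D_mult Q (trunc N a) M l = D_mult (trunc N a) D_z M l"
    by (simp add: fun_eq_iff D_sub_def)
  moreover have "D_mult Q (trunc N a) M l = trunc N a M (l - 1)"
    using lower less.prems by (intro D_mult_GrD_Q_column) auto
  ultimately have "of_nat (M + 1) * trunc N a (M + 1) l = 0"
    by (simp add: D_mult_D_z_right)
  then show ?case
    using NM by (simp add: trunc_def del: of_nat_Suc)
qed

lemma GrD_dressing_exists:
  assumes \<Psi>: "\<Psi> \<in> one_plus_Hminus"
  shows "\<exists>G. G \<in> Gcal \<and> (\<forall>n. D_act G (zpow n) = Q_orbit \<Psi> n)"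
proof -
  note \<Psi>0 = deg_le_one_plus_Hminus[OF \<Psi>]
  obtain a where a: "\<And>n. deg_le (int n) (a n)" and aQ: "\<And>n. D_act a (zpow n) = Q_orbit \<Psi> n"
    using diffop_with_zpow_images[of "Q_orbit \<Psi>"] deg_le_Q_orbit[OF \<Psi>0] by blast
  have "a 0 = \<Psi>"
    using aQ[of 0] by (simp add: fun_eq_iff D_act_zpow Q_orbit_def D_act_D_one)
  then have "a m k = D_one m k" if "0 \<le> k" for m k
    using \<Psi> that GrD_dressing_column[OF a, of m k] aQ Q_orbit_Suc[OF \<Psi>0]
    by (cases "m = 0"; cases "k = 0") (auto simp: D_one_def one_plus_Hminus_def)
  then have "a \<in> Gcal"
    using a unfolding Gcal_iff_coeffs Hset_iff_deg_le by blast
  with aQ show ?thesis by blast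
qed

text \<open>The Sato element \<open>G\<close> of the span of the \<open>Q\<close>-orbit intertwines \<open>Q\<close> with \<open>z\<close> and \<open>P\<close>
  with \<open>\<partial>\<close>, so it dresses \<open>(\<partial>, z)\<close> into \<open>(P, Q)\<close>.\<close>
lemma GrD_inverse:
  assumes \<Psi>: "\<Psi> \<in> one_plus_Hminus" "D_act P \<Psi> = (\<lambda>_. 0)"
  shows "lin_span (range (\<lambda>n. D_act (D_pow Q n) \<Psi>)) \<in> Gr0 \<and>
         rho (lin_span (range (\<lambda>n. D_act (D_pow Q n) \<Psi>))) = (P, Q)"
proof -
  note \<Psi>0 = deg_le_one_plus_Hminus[OF \<Psi>(1)]
  obtain G where G: "G \<in> Gcal" and GQ: "\<And>n. D_act G (zpow n) = Q_orbit \<Psi> n"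
    using GrD_dressing_exists[OF \<Psi>(1)] by blast
  note opG = op_deg_le_Gcal[OF G]
  have span: "lin_span (range (\<lambda>n. D_act (D_pow Q n) \<Psi>)) = D_act G ` Hplus"
    using lin_span_Gcal_zpow[OF G] GQ by (simp add: Q_orbit_def)
  have "D_mult Q G = D_mult G D_z"
    by (rule diffop_eq_if_act_zpow_eq)
      (simp add: D_act_D_mult[OF op_deg_le_GrD_Q opG deg_le_zpow] D_act_D_mult[OF opG op_deg_le_D_z deg_le_zpow]
        GQ D_act_D_z_zpow Q_orbit_Suc[OF \<Psi>0])
  then have "dress G D_z = Q"
    by (rule dress_eq_if_intertwines[OF G op_deg_le_D_z op_deg_le_GrD_Q])
  moreover have "D_mult P G = D_mult G D_del"
  proof (rule diffop_eq_if_act_zpow_eq)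
    fix n
    show "D_act (D_mult P G) (zpow n) = D_act (D_mult G D_del) (zpow n)"
      unfolding D_act_D_mult[OF op_deg_le_GrD_P opG deg_le_zpow] D_act_D_mult[OF opG op_deg_le_D_del deg_le_zpow] GQ
      by (cases n) (simp_all add: D_act_D_del_zpow_0 D_act_zero D_act_D_del_zpow_Suc D_act_scale[OF opG deg_le_zpow]
          D_act_GrD_P_Q_orbit[OF \<Psi>] GQ)
  qed
  then have "dress G D_del = P"
    by (rule dress_eq_if_intertwines[OF G op_deg_le_D_del op_deg_le_GrD_P])
  ultimately show ?thesis
    using span Gcal_image_Gr0[OF G]
    by (simp add: rho_def KS_P_eq_dress KS_Q_eq_dress sato_Gcal_image[OF G])
qed

end

section \<open>The Kac--Schwarz correspondence\<close>

lemma rho_eq_dress: "rho W = (dress (sato W) D_del, dress (sato W) D_z)"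
  by (simp add: rho_def KS_P_eq_dress KS_Q_eq_dress)

lemma rho_Gr0: "W \<in> Gr0 \<Longrightarrow> rho W \<in> GrD"
  using dress_GrD[OF sato(1)] by (simp add: rho_eq_dress)

text \<open>The pair \<open>\<rho> W\<close> recovers the Sato group element: \<open>G 1\<close> is the unique wave function
  of \<open>P\<close>, and \<open>G z\<^sup>n = Q\<^sup>n (G 1)\<close>.\<close>
lemma inj_on_rho: "inj_on rho Gr0"
proof (rule inj_onI)
  fix W1 W2 assume W: "W1 \<in> Gr0" "W2 \<in> Gr0" and eq: "rho W1 = rho W2"
  define G1 G2 where "G1 = sato W1" and "G2 = sato W2"
  have G: "G1 \<in> Gcal" "G2 \<in> Gcal"
    unfolding G1_def G2_def using sato(1) W by auto
  have P: "dress G1 D_del = dress G2 D_del" and Q: "dress G1 D_z = dress G2 D_z"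
    using eq unfolding rho_eq_dress G1_def G2_def by auto
  have "D_act G1 (zpow 0) = D_act G2 (zpow 0)"
    using wave_function_unique[OF dress_GrD[OF G(1)] Gcal_zpow_0_one_plus_Hminus[OF G(1)]
        dress_del_kernel[OF G(1)] Gcal_zpow_0_one_plus_Hminus[OF G(2)]]
      dress_del_kernel[OF G(2)] P by simp
  then have "D_act G1 (zpow n) = D_act G2 (zpow n)" for n
    using D_act_D_pow_dress_z[OF G(1), of n] D_act_D_pow_dress_z[OF G(2), of n] Q by simp
  then have "G1 = G2"
    by (rule diffop_eq_if_act_zpow_eq)
  then show "W1 = W2"
    using sato(2) W unfolding G1_def G2_def by metis
qed

theorem theorem1p1:
  shows "bij_betw rho Gr0 GrD \<and>
    (\<forall>P Q. (P, Q) \<in> GrD \<longrightarrow>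
       (\<exists>!\<Psi>. \<Psi> \<in> one_plus_Hminus \<and> D_act P \<Psi> = (\<lambda>_. 0)) \<and>
       (\<forall>\<Psi>. \<Psi> \<in> one_plus_Hminus \<and> D_act P \<Psi> = (\<lambda>_. 0) \<longrightarrow>
          lin_span (range (\<lambda>n. D_act (D_pow Q n) \<Psi>)) \<in> Gr0 \<and>
          rho (lin_span (range (\<lambda>n. D_act (D_pow Q n) \<Psi>))) = (P, Q)))"
proof (intro conjI allI impI)
  fix P Q assume PQ: "(P, Q) \<in> GrD"
  show "\<exists>!\<Psi>. \<Psi> \<in> one_plus_Hminus \<and> D_act P \<Psi> = (\<lambda>_. 0)"
    using wave_function_exists[OF PQ] wave_function_unique[OF PQ] by blast
  fix \<Psi> assume "\<Psi> \<in> one_plus_Hminus \<and> D_act P \<Psi> = (\<lambda>_. 0)"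
  then show "lin_span (range (\<lambda>n. D_act (D_pow Q n) \<Psi>)) \<in> Gr0"
    and "rho (lin_span (range (\<lambda>n. D_act (D_pow Q n) \<Psi>))) = (P, Q)"
    using GrD_inverse[OF PQ] by auto
next
  have "GrD \<subseteq> rho ` Gr0"
  proof (clarify)
    fix P Q assume PQ: "(P, Q) \<in> GrD"
    then obtain \<Psi> where "\<Psi> \<in> one_plus_Hminus" "D_act P \<Psi> = (\<lambda>_. 0)"
      using wave_function_exists by blast
    from GrD_inverse[OF PQ this] show "(P, Q) \<in> rho ` Gr0"
      by (metis image_eqI)
  qed
  then show "bij_betw rho Gr0 GrD"
    unfolding bij_betw_def using inj_on_rho rho_Gr0 by blast
qed

end
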